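(* Let $q\in\mathbb{C}_p$ satisfy $|q-1|_p<p^{-1/(p-1)}$ and $q\neq 1$, and let $f\in UD(\mathbb{Z}_p,\mathbb{C}_p)$. Then for every $x\in\mathbb{Z}_p$, $$ f(x)\,q^x=\frac{\log q}{q-1}\sum_{w}\phi_{w^{-1}}(x)\,(\hat f_w)_q ,$$ where $\sum_w$ means $\lim_{n\to\infty}\sum_{w\in C_{p^n}}$.
   Context: $p$ is a prime, $\mathbb{C}_p$ is the completion of an algebraic closure of $\mathbb{Q}_p$. The element $q\in\mathbb{C}_p$ satisfies $|q-1|_p<p^{-1/(p-1)}$, and $q^x=\exp(x\log q)$ for $x\in\mathbb{Z}_p$; $[x]=[x;q]=\frac{1-q^x}{1-q}$. $UD(\mathbb{Z}_p,\mathbb{C}_p)$ is the space of uniformly differentiable functions $\mathbb{Z}_p\to\mathbb{C}_p$. The $p$-adic $q$-integral is $I_q(f)=\int_{\mathbb{Z}_p}f(x)\,d\mu_q(x)=\lim_{N\to\infty}\frac{1}{[p^N]}\sum_{x=0}^{p^N-1}f(x)q^x$. $C_{p^n}$ is the group of $p^n$-th roots of unity in $\mathbb{C}_p$ and $T_p=\bigcup_{n\ge 1}C_{p^n}$. For $\alpha\in T_p$ (or more generally $\alpha$ a principal unit of $\mathbb{C}_p$) let $\phi_\alpha(x)=\alpha^x$. The $I_q$-Fourier transform of $f$ at $w$ is $(\hat f_w)_q=I_q(\phi_w f)=\int_{\mathbb{Z}_p}w^x f(x)\,d\mu_q(x)$. *)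

theory Defs
  imports Complex_Main "HOL-Computational_Algebra.Computational_Algebra"
begin

text \<open>We model C_p abstractly: a field K with an
absolute value v that is non-archimedean, restricts to the p-adic absolute value on the
integers (hence on Q), is complete, and K is algebraically closed. C_p is such a field.\<close>

definition nonarch_abs :: "('a::field \<Rightarrow> real) \<Rightarrow> bool" where
  "nonarch_abs v \<longleftrightarrow> (\<forall>x. 0 \<le> v x) \<and> (\<forall>x. v x = 0 \<longleftrightarrow> x = 0)
     \<and> (\<forall>x y. v (x * y) = v x * v y) \<and> (\<forall>x y. v (x + y) \<le> max (v x) (v y))"

definition vconv :: "('a::field \<Rightarrow> real) \<Rightarrow> (nat \<Rightarrow> 'a) \<Rightarrow> 'a \<Rightarrow> bool" where
  "vconv v s L \<longleftrightarrow> ((\<lambda>n. v (s n - L)) \<longlonglongrightarrow> 0)"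

definition vlim :: "('a::field \<Rightarrow> real) \<Rightarrow> (nat \<Rightarrow> 'a) \<Rightarrow> 'a" where
  "vlim v s = (THE L. vconv v s L)"

definition vcomplete :: "('a::field \<Rightarrow> real) \<Rightarrow> bool" where
  "vcomplete v \<longleftrightarrow> (\<forall>s::nat \<Rightarrow> 'a.
     (\<forall>e>0. \<exists>N. \<forall>m\<ge>N. \<forall>n\<ge>N. v (s m - s n) < e) \<longrightarrow> (\<exists>L. vconv v s L))"

definition alg_closed :: "'a::field itself \<Rightarrow> bool" where
  "alg_closed _ \<longleftrightarrow> (\<forall>P::'a poly. 0 < degree P \<longrightarrow> (\<exists>x. poly P x = 0))"

definition Cp_field :: "nat \<Rightarrow> ('a::field \<Rightarrow> real) \<Rightarrow> bool" where
  "Cp_field p v \<longleftrightarrow> prime p \<and> nonarch_abs v \<and> vcomplete v \<and> alg_closed TYPE('a)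
     \<and> (\<forall>a::int. a \<noteq> 0 \<longrightarrow> v (of_int a) = inverse (real p ^ multiplicity (int p) a))"

text \<open>Z_p inside K: the closure of the integers.\<close>
definition Zp :: "('a::field \<Rightarrow> real) \<Rightarrow> 'a set" where
  "Zp v = {x. \<exists>s::nat \<Rightarrow> int. vconv v (\<lambda>n. of_int (s n)) x}"

definition vsuminf :: "('a::field \<Rightarrow> real) \<Rightarrow> (nat \<Rightarrow> 'a) \<Rightarrow> 'a" where
  "vsuminf v a = vlim v (\<lambda>N. \<Sum>n<N. a n)"

definition plog :: "('a::field \<Rightarrow> real) \<Rightarrow> 'a \<Rightarrow> 'a" where
  "plog v z = vsuminf v (\<lambda>n. (-1) ^ n * (z - 1) ^ Suc n / of_nat (Suc n))"

definition pexp :: "('a::field \<Rightarrow> real) \<Rightarrow> 'a \<Rightarrow> 'a" where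
  "pexp v z = vsuminf v (\<lambda>n. z ^ n / of_nat (fact n))"

definition qpow :: "('a::field \<Rightarrow> real) \<Rightarrow> 'a \<Rightarrow> 'a \<Rightarrow> 'a" where
  "qpow v q x = pexp v (x * plog v q)"

definition qnum :: "('a::field \<Rightarrow> real) \<Rightarrow> 'a \<Rightarrow> 'a \<Rightarrow> 'a" where
  "qnum v q x = (1 - qpow v q x) / (1 - q)"

text \<open>alpha^x for alpha in T_p (or a principal unit) and x in Z_p: the limit of alpha^n
along natural numbers n converging to x (alpha^x = alpha^(x mod p^n) for alpha in C_{p^n}).\<close>
definition upow :: "('a::field \<Rightarrow> real) \<Rightarrow> 'a \<Rightarrow> 'a \<Rightarrow> 'a" where
  "upow v \<alpha> x = (THE L. \<forall>s::nat \<Rightarrow> nat. vconv v (\<lambda>k. of_nat (s k)) x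
                          \<longrightarrow> vconv v (\<lambda>k. \<alpha> ^ s k) L)"

definition UD :: "('a::field \<Rightarrow> real) \<Rightarrow> ('a \<Rightarrow> 'a) \<Rightarrow> bool" where
  "UD v f \<longleftrightarrow> (\<exists>f'. \<forall>e>0. \<exists>d>0. \<forall>a\<in>Zp v. \<forall>x\<in>Zp v. \<forall>y\<in>Zp v.
      x \<noteq> y \<and> v (x - a) < d \<and> v (y - a) < d \<longrightarrow> v ((f x - f y) / (x - y) - f' a) < e)"

definition Iq :: "nat \<Rightarrow> ('a::field \<Rightarrow> real) \<Rightarrow> 'a \<Rightarrow> ('a \<Rightarrow> 'a) \<Rightarrow> 'a" where
  "Iq p v q f = vlim v (\<lambda>N. (\<Sum>x<p ^ N. f (of_nat x) * qpow v q (of_nat x))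
                               / qnum v q (of_nat (p ^ N)))"

definition roots_C :: "nat \<Rightarrow> nat \<Rightarrow> 'a::field set" where
  "roots_C p n = {w. w ^ (p ^ n) = 1}"

definition qfourier :: "nat \<Rightarrow> ('a::field \<Rightarrow> real) \<Rightarrow> 'a \<Rightarrow> ('a \<Rightarrow> 'a) \<Rightarrow> 'a \<Rightarrow> 'a" where
  "qfourier p v q f w = Iq p v q (\<lambda>x. upow v w x * f x)"

end

theory Submission
  imports Defs
begin

text \<open>
  Choose naturals \<open>r\<^sub>n < p^n\<close> with \<open>|x - r\<^sub>n| \<le> p^-n\<close>. Orthogonality of the characters
  \<open>w \<mapsto> w^y\<close> of \<open>C\<^bsub>p^n\<^esub>\<close> turns the \<open>n\<close>-th partial Fourier sum at \<open>x\<close> into \<open>p^n\<close>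
  times the \<open>q\<close>-integral of \<open>f\<close> over the ball \<open>r\<^sub>n + p^n \<int>\<^sub>p\<close>. That integral is the limit of
  Riemann sums over finer and finer partitions of the ball; by uniform differentiability each
  refinement changes the Riemann sum by an amount bounded independently of the ball, so the
  integral equals \<open>f(r\<^sub>n) q^r\<^sub>n / [p^n] + O(1)\<close>. Multiplying by \<open>p^n\<close> kills the error
  term, and \<open>p^n / [p^n] = (q - 1) p^n / (q^p^n - 1)\<close> tends to \<open>(q - 1) / log q\<close>.
\<close>

lemma Cauchy_product_partial_sums_diff:
  fixes a b :: "nat \<Rightarrow> 'a::comm_ring"
  shows "(\<Sum>n<N. \<Sum>k\<le>n. a k * b (n - k)) - (\<Sum>n<N. a n) * (\<Sum>n<N. b n)
           = - (\<Sum>(i, j)\<in>{..<N} \<times> {..<N} - {(i, j). i + j < N}. a i * b j)"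
proof -
  have sub: "{(i, j). i + j < N} \<subseteq> {..<N} \<times> {..<N}"
    by auto
  have "(\<Sum>n<N. a n) * (\<Sum>n<N. b n) = (\<Sum>(i, j)\<in>{..<N} \<times> {..<N}. a i * b j)"
    by (simp add: sum_product sum.cartesian_product)
  also have "\<dots> = (\<Sum>(i, j)\<in>{..<N} \<times> {..<N} - {(i, j). i + j < N}. a i * b j)
                   + (\<Sum>(i, j)\<in>{(i, j). i + j < N}. a i * b j)"
    by (rule sum.subset_diff[OF sub]) simp
  also have "(\<Sum>(i, j)\<in>{(i, j). i + j < N}. a i * b j) = (\<Sum>n<N. \<Sum>k\<le>n. a k * b (n - k))"
    by (rule sum.triangle_reindex)
  finally show ?thesis
    by simp
qed

lemma power_eq_power_mod:
  fixes w :: "'a::monoid_mult"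
  assumes "w ^ k = 1"
  shows "w ^ n = w ^ (n mod k)"
proof -
  have "w ^ n = (w ^ k) ^ (n div k) * w ^ (n mod k)"
    by (simp flip: power_mult power_add)
  then show ?thesis
    using assms by simp
qed

lemma mod_add_power_mult: "m \<le> N \<Longrightarrow> (s + b ^ N * j) mod b ^ m = s mod (b::nat) ^ m"
  by (metis le_imp_power_dvd mod_mult_self2 dvd_def mult.assoc)

lemma sum_lessThan_mult_split:
  fixes a b :: nat
  shows "(\<Sum>y<a * b. g y) = (\<Sum>k<b. \<Sum>s<a. g (s + a * k))"
proof -
  have "sum g {k * a..<k * a + a} = (\<Sum>s<a. g (s + a * k))" for k
  proof -
    have "sum g {0 + k * a..<a + k * a} = (\<Sum>s\<in>{0..<a}. g (s + k * a))"
      by (rule sum.shift_bounds_nat_ivl)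
    then show ?thesis
      by (simp only: add_0 add.commute[of a] atLeast0LessThan mult.commute[of k a])
  qed
  then have "(\<Sum>k<b. \<Sum>s<a. g (s + a * k)) = (\<Sum>k<b. sum g {k * a..<k * a + a})"
    by simp
  also have "\<dots> = (\<Sum>y<b * a. g y)"
    by (rule sum.nat_group)
  finally show ?thesis
    by (simp only: mult.commute)
qed

lemma geometric_tendsto_0: "0 \<le> c \<Longrightarrow> c < 1 \<Longrightarrow> (\<lambda>n. d * c ^ n) \<longlonglongrightarrow> (0::real)"
  by (intro tendsto_mult_right_zero LIMSEQ_power_zero) simp

section \<open>Non-archimedean absolute values\<close>

locale nonarch_valued =
  fixes v :: "'a::field \<Rightarrow> real"
  assumes nonarch: "nonarch_abs v"
begin

lemma v_nonneg [simp]: "0 \<le> v x"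
  using nonarch by (simp add: nonarch_abs_def)

lemma v_eq_0_iff [simp]: "v x = 0 \<longleftrightarrow> x = 0"
  using nonarch by (simp add: nonarch_abs_def)

lemma v_0 [simp]: "v 0 = 0"
  by simp

lemma v_mult: "v (x * y) = v x * v y"
  using nonarch by (simp add: nonarch_abs_def)

lemma v_add_le_max: "v (x + y) \<le> max (v x) (v y)"
  using nonarch by (simp add: nonarch_abs_def)

lemma v_pos: "x \<noteq> 0 \<Longrightarrow> 0 < v x"
  using v_nonneg[of x] v_eq_0_iff[of x] by linarith

lemma v_1 [simp]: "v 1 = 1"
  using v_mult[of 1 1] v_pos[of 1] by simp

lemma v_minus_1: "v (-1) = 1"
proof -
  have "(v (-1) - 1) * (v (-1) + 1) = 0"
    using v_mult[of "-1" "-1"] by (simp add: algebra_simps)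
  moreover have "v (-1) + 1 > 0"
    using v_nonneg[of "-1"] by linarith
  ultimately show ?thesis by simp
qed

lemma v_minus [simp]: "v (- x) = v x"
  using v_mult[of "-1" x] v_minus_1 by simp

lemma v_minus_commute: "v (x - y) = v (y - x)"
  by (metis minus_diff_eq v_minus)

lemma v_power: "v (x ^ n) = v x ^ n"
  by (induction n) (simp_all add: v_mult)

lemma v_inverse: "v (inverse x) = inverse (v x)"
proof (cases "x = 0")
  case False
  then have "v x * v (inverse x) = 1"
    using v_mult[of x "inverse x"] by simp
  then show ?thesis
    by (metis inverse_unique)
qed simp

lemma v_divide: "v (x / y) = v x / v y"
  by (simp add: divide_inverse v_mult v_inverse)

lemma v_add_le: "v x \<le> c \<Longrightarrow> v y \<le> c \<Longrightarrow> v (x + y) \<le> c"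
  using v_add_le_max[of x y] by linarith

lemma v_add_less: "v x < c \<Longrightarrow> v y < c \<Longrightarrow> v (x + y) < c"
  using v_add_le_max[of x y] by linarith

lemma v_diff_le: "v x \<le> c \<Longrightarrow> v y \<le> c \<Longrightarrow> v (x - y) \<le> c"
  using v_add_le[of x c "-y"] by simp

lemma v_diff_le_max: "v (x - y) \<le> max (v (x - z)) (v (z - y))"
  using v_add_le_max[of "x - z" "z - y"] by simp

lemma v_triangle: "v (x + y) \<le> v x + v y"
  using v_add_le_max[of x y] v_nonneg[of x] v_nonneg[of y] by linarith

lemma v_diff_triangle: "v (x - y) \<le> v (x - z) + v (z - y)"
  using v_triangle[of "x - z" "z - y"] by simp

lemma v_add_eq_dominant:
  assumes "v y < v x"
  shows "v (x + y) = v x"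
proof -
  have "v (x + y) \<le> v x"
    using v_add_le_max[of x y] assms by linarith
  moreover have "v x \<le> max (v (x + y)) (v y)"
    using v_add_le_max[of "x + y" "-y"] by simp
  ultimately show ?thesis
    using assms by linarith
qed

lemma v_eq_if_v_diff_le:
  assumes "v (x - y) \<le> c * v y" "c < 1"
  shows "v x = v y"
proof (cases "y = 0")
  case False
  then have "c * v y < v y"
    using assms(2) v_pos[of y] by simp
  then have "v (x - y) < v y"
    using assms(1) by linarith
  then show ?thesis
    using v_add_eq_dominant[of "x - y" y] by simp
qed (use assms v_nonneg[of x] in simp)

lemma v_sum_le:
  assumes "\<And>i. i \<in> A \<Longrightarrow> v (f i) \<le> c" "0 \<le> c"
  shows "v (sum f A) \<le> c"
  using assms by (induction A rule: infinite_finite_induct) (simp_all add: v_add_le)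

lemma v_sum_less:
  assumes "\<And>i. i \<in> A \<Longrightarrow> v (f i) < c" "0 < c"
  shows "v (sum f A) < c"
  using assms by (induction A rule: infinite_finite_induct) (simp_all add: v_add_less)

lemma v_of_nat_le_1: "v (of_nat n) \<le> 1"
  by (induction n) (simp_all add: v_add_le)

lemma v_of_int_le_1: "v (of_int n) \<le> 1"
  by (cases n rule: int_cases) (simp_all add: v_of_nat_le_1 del: of_nat_Suc)

lemma v_diff_le_if_steps_le:
  assumes "\<And>n. n \<ge> m \<Longrightarrow> v (s (Suc n) - s n) \<le> K" "0 \<le> K"
  shows "v (s (m + k) - s m) \<le> K"
proof (induction k)
  case (Suc k)
  then have "max (v (s (Suc (m + k)) - s (m + k))) (v (s (m + k) - s m)) \<le> K"
    using assms(1)[of "m + k"] by simp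
  then show ?case
    using order_trans[OF v_diff_le_max[of "s (Suc (m + k))" "s m" "s (m + k)"]] by simp
qed (use assms(2) in simp)

lemma vconv_iff: "vconv v s L \<longleftrightarrow> (\<forall>e>0. \<exists>N. \<forall>n\<ge>N. v (s n - L) < e)"
  unfolding vconv_def LIMSEQ_iff by simp

lemma vconv_dominated:
  assumes "\<forall>\<^sub>F n in sequentially. v (s n - L) \<le> c n" "c \<longlonglongrightarrow> 0"
  shows "vconv v s L"
  unfolding vconv_def by (rule tendsto_sandwich[OF _ assms(1) tendsto_const assms(2)]) simp

lemma vconv_unique:
  assumes "vconv v s L1" "vconv v s L2"
  shows "L1 = L2"
proof (rule ccontr)
  assume "L1 \<noteq> L2"
  then have "v (L1 - L2) > 0"
    by (simp add: v_pos)
  then obtain n where "v (s n - L1) < v (L1 - L2)" "v (s n - L2) < v (L1 - L2)"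
    using assms unfolding vconv_iff by (metis nle_le)
  moreover have "v (L1 - L2) \<le> max (v (L1 - s n)) (v (s n - L2))"
    by (rule v_diff_le_max)
  ultimately show False
    using v_minus_commute[of L1 "s n"] by linarith
qed

lemma vlim_eq: "vconv v s L \<Longrightarrow> vlim v s = L"
  unfolding vlim_def using vconv_unique by blast

lemma vconv_const: "vconv v (\<lambda>n. c) c"
  by (simp add: vconv_def)

lemma vconv_eventually_eq:
  assumes "vconv v t L" "\<forall>\<^sub>F n in sequentially. s n = t n"
  shows "vconv v s L"
proof -
  have "\<forall>\<^sub>F n in sequentially. v (t n - L) = v (s n - L)"
    using assms(2) by eventually_elim simp
  with assms(1) show ?thesis
    unfolding vconv_def by (rule Lim_transform_eventually)
qed

lemma vconv_add:
  assumes "vconv v s L" "vconv v t M"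
  shows "vconv v (\<lambda>n. s n + t n) (L + M)"
proof (rule vconv_dominated)
  show "\<forall>\<^sub>F n in sequentially. v (s n + t n - (L + M)) \<le> v (s n - L) + v (t n - M)"
    using v_triangle by (intro always_eventually allI) (metis add_diff_add)
  show "(\<lambda>n. v (s n - L) + v (t n - M)) \<longlonglongrightarrow> 0"
    using assms by (simp add: vconv_def tendsto_add_zero)
qed

lemma vconv_mult:
  assumes "vconv v s L" "vconv v t M"
  shows "vconv v (\<lambda>n. s n * t n) (L * M)"
proof (rule vconv_dominated)
  show "\<forall>\<^sub>F n in sequentially. v (s n * t n - L * M)
          \<le> v (s n - L) * (v (t n - M) + v M) + v L * v (t n - M)"
  proof (intro always_eventually allI)
    fix n
    have "s n * t n - L * M = (s n - L) * t n + L * (t n - M)"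
      by (simp add: algebra_simps)
    moreover have "v (t n) \<le> v (t n - M) + v M"
      using v_triangle[of "t n - M" M] by simp
    ultimately show "v (s n * t n - L * M) \<le> v (s n - L) * (v (t n - M) + v M) + v L * v (t n - M)"
      using v_triangle[of "(s n - L) * t n" "L * (t n - M)"]
      by (simp add: v_mult) (meson add_right_mono mult_left_mono order_trans v_nonneg)
  qed
  show "(\<lambda>n. v (s n - L) * (v (t n - M) + v M) + v L * v (t n - M)) \<longlonglongrightarrow> 0"
    using assms unfolding vconv_def by (auto intro!: tendsto_eq_intros)
qed

lemma vconv_cmult: "vconv v s L \<Longrightarrow> vconv v (\<lambda>n. c * s n) (c * L)"
  using vconv_mult[OF vconv_const] by blast

lemma vconv_sum:
  "finite A \<Longrightarrow> (\<And>i. i \<in> A \<Longrightarrow> vconv v (s i) (L i)) \<Longrightarrow>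
     vconv v (\<lambda>n. \<Sum>i\<in>A. s i n) (\<Sum>i\<in>A. L i)"
  by (induction A rule: finite_induct) (simp_all add: vconv_const vconv_add)

lemma vconv_limit_le:
  assumes "vconv v s L" "\<forall>\<^sub>F n in sequentially. v (s n - P) \<le> c"
  shows "v (L - P) \<le> c"
proof (rule ccontr)
  assume "\<not> v (L - P) \<le> c"
  then have "\<forall>\<^sub>F n in sequentially. v (s n - L) < v (L - P) - c"
    using assms(1) unfolding vconv_def by (auto dest!: order_tendstoD(2)[where a = "v (L - P) - c"])
  with assms(2) have "\<forall>\<^sub>F n in sequentially. False"
  proof eventually_elim
    case (elim n)
    then show False
      using v_diff_le_max[of L P "s n"] v_minus_commute[of L "s n"] v_nonneg[of "s n - P"] \<open>\<not> v (L - P) \<le> c\<close>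
      by (auto simp: le_max_iff_disj)
  qed
  then show False
    by simp
qed

lemma v_limit_diff_le_if_steps_le:
  assumes "vconv v s L" "\<And>n. n \<ge> m \<Longrightarrow> v (s (Suc n) - s n) \<le> K" "0 \<le> K"
  shows "v (L - s m) \<le> K"
proof (rule vconv_limit_le[OF assms(1)])
  show "\<forall>\<^sub>F n in sequentially. v (s n - s m) \<le> K"
    using eventually_ge_at_top[of m]
  proof eventually_elim
    case (elim n)
    then show ?case
      using v_diff_le_if_steps_le[of m s K "n - m"] assms(2,3) by simp
  qed
qed

lemma v_Cauchy_product_partial_sums_diff_tendsto_0:
  assumes a: "(\<lambda>n. v (a n)) \<longlonglongrightarrow> 0" and b: "(\<lambda>n. v (b n)) \<longlonglongrightarrow> 0"
  shows "(\<lambda>N. v ((\<Sum>n<N. \<Sum>k\<le>n. a k * b (n - k)) - (\<Sum>n<N. a n) * (\<Sum>n<N. b n))) \<longlonglongrightarrow> 0"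
proof -
  define c where "c = (\<lambda>n. max (v (a n)) (v (b n)))"
  have c: "c \<longlonglongrightarrow> 0"
    using tendsto_max[OF a b] by (simp add: c_def)
  then have "Bseq c"
    by (metis convergent_imp_Bseq convergentI)
  then obtain B where "B > 0" and B: "\<And>n. c n \<le> B"
    unfolding Bseq_def c_def real_norm_def by (metis abs_of_nonneg max.coboundedI1 v_nonneg)
  have pair: "v (a i * b j) \<le> B * c i \<and> v (a i * b j) \<le> B * c j" for i j
  proof -
    have "v (a i) \<le> c i" "v (a i) \<le> B" "v (b j) \<le> c j" "v (b j) \<le> B"
      using B[of i] B[of j] by (auto simp: c_def)
    have "v (a i) * v (b j) \<le> c i * B"
      using \<open>v (a i) \<le> c i\<close> \<open>v (b j) \<le> B\<close> by (rule mult_mono) (simp_all add: c_def le_max_iff_disj)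
    moreover have "v (a i) * v (b j) \<le> B * c j"
      using \<open>v (a i) \<le> B\<close> \<open>v (b j) \<le> c j\<close> by (rule mult_mono) (use \<open>B > 0\<close> in simp_all)
    ultimately show ?thesis
      by (simp add: v_mult mult.commute)
  qed
  have "\<exists>N0. \<forall>N\<ge>N0. v (\<Sum>(i, j)\<in>{..<N} \<times> {..<N} - {(i, j). i + j < N}. a i * b j) < e"
    if "e > 0" for e
  proof -
    obtain K where K: "\<And>n. n \<ge> K \<Longrightarrow> B * c n < e"
      using order_tendstoD(2)[OF c, of "e / B"] \<open>e > 0\<close> \<open>B > 0\<close>
      by (auto simp: eventually_sequentially pos_less_divide_eq mult.commute)
    have "v (a i * b j) < e" if "i + j \<ge> 2 * K" for i j
      using pair[of i j] K[of i] K[of j] that by (cases "i \<ge> K") auto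
    then show ?thesis
      using \<open>e > 0\<close> by (intro exI[of _ "2 * K"] allI impI v_sum_less) auto
  qed
  then show ?thesis
    unfolding LIMSEQ_iff Cauchy_product_partial_sums_diff by simp
qed

end

locale complete_nonarch_valued = nonarch_valued +
  assumes complete: "vcomplete v"
begin

lemma vconv_if_steps_small:
  assumes "\<And>e. e > 0 \<Longrightarrow> \<exists>N. \<forall>n\<ge>N. v (s (Suc n) - s n) \<le> e"
  shows "\<exists>L. vconv v s L"
proof -
  have "\<exists>N. \<forall>m\<ge>N. \<forall>n\<ge>N. v (s m - s n) < e" if e: "e > 0" for e
  proof -
    obtain N where N: "\<forall>n\<ge>N. v (s (Suc n) - s n) \<le> e / 2"
      using assms e by (meson half_gt_zero)
    have "v (s m - s n) \<le> e / 2" if "m \<ge> N" "n \<ge> N" for m n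
      using v_diff_le_if_steps_le[of N s "e / 2" "m - N"] v_diff_le_if_steps_le[of N s "e / 2" "n - N"]
        N e that v_diff_le_max[of "s m" "s n" "s N"] v_minus_commute[of "s N" "s n"]
      by auto
    then show ?thesis
      using e by fastforce
  qed
  then show ?thesis
    using complete unfolding vcomplete_def by blast
qed

lemma vsuminf_vconv:
  assumes "(\<lambda>n. v (a n)) \<longlonglongrightarrow> 0"
  shows "vconv v (\<lambda>N. \<Sum>n<N. a n) (vsuminf v a)"
proof -
  have "\<exists>N. \<forall>n\<ge>N. v (a n) \<le> e" if "e > 0" for e
    using order_tendstoD(2)[OF assms that] by (meson eventually_sequentially less_imp_le)
  then obtain L where "vconv v (\<lambda>N. \<Sum>n<N. a n) L"
    using vconv_if_steps_small[of "\<lambda>N. \<Sum>n<N. a n"] by auto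
  then show ?thesis
    unfolding vsuminf_def using vlim_eq by simp
qed

lemma v_vsuminf_minus_partial_sum_le:
  assumes "(\<lambda>n. v (a n)) \<longlonglongrightarrow> 0" "\<And>n. n \<ge> N \<Longrightarrow> v (a n) \<le> c" "0 \<le> c"
  shows "v (vsuminf v a - (\<Sum>n<N. a n)) \<le> c"
proof (rule vconv_limit_le[OF vsuminf_vconv[OF assms(1)]])
  show "\<forall>\<^sub>F M in sequentially. v ((\<Sum>n<M. a n) - (\<Sum>n<N. a n)) \<le> c"
    using eventually_ge_at_top[of N]
  proof eventually_elim
    case (elim M)
    then have "(\<Sum>n<M. a n) - (\<Sum>n<N. a n) = (\<Sum>n\<in>{N..<M}. a n)"
      by (metis atLeast0LessThan sum_diff_nat_ivl zero_le)
    also have "v \<dots> \<le> c"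
      using assms(2,3) by (intro v_sum_le) auto
    finally show ?case .
  qed
qed

lemma vsuminf_Cauchy_product:
  assumes a: "(\<lambda>n. v (a n)) \<longlonglongrightarrow> 0" and b: "(\<lambda>n. v (b n)) \<longlonglongrightarrow> 0"
  shows "vconv v (\<lambda>N. \<Sum>n<N. \<Sum>k\<le>n. a k * b (n - k)) (vsuminf v a * vsuminf v b)"
  using vconv_mult[OF vsuminf_vconv[OF a] vsuminf_vconv[OF b]] v_diff_triangle
    v_Cauchy_product_partial_sums_diff_tendsto_0[OF a b]
  by (intro vconv_dominated[where c = "\<lambda>N. _ N + v (_ N - vsuminf v a * vsuminf v b)"])
    (auto intro!: always_eventually tendsto_add_zero simp: vconv_def)

end

section \<open>Roots of unity of \<open>p\<close>-power order\<close>

lemma alg_closed_nth_root: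
  fixes z :: "'a::field"
  assumes "alg_closed TYPE('a)" "n > 0"
  obtains y :: 'a where "y ^ n = z"
proof -
  have "coeff (monom 1 n - [:z:]) n = 1"
    using assms(2) by (simp add: coeff_pCons split: nat.split)
  then have "0 < degree (monom 1 n - [:z:])"
    using assms(2) le_degree[of "monom 1 n - [:z:]" n] by fastforce
  then obtain y :: 'a where "poly (monom 1 n - [:z:]) y = 0"
    using assms(1) unfolding alg_closed_def by blast
  then show thesis
    using that by (simp add: poly_monom)
qed

lemma alg_closed_nontrivial_root_of_unity:
  assumes "alg_closed TYPE('a)" "n \<ge> 2" "(of_nat n :: 'a) \<noteq> 0"
  obtains z :: "'a::field" where "z ^ n = 1" "z \<noteq> 1"
proof -
  define P :: "'a poly" where "P = (\<Sum>i<n. monom 1 i)"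
  have "coeff P 1 = 1"
    using assms(2) by (simp add: P_def coeff_sum coeff_monom)
  then have "0 < degree P"
    using le_degree[of P 1] by fastforce
  then obtain z :: 'a where "poly P z = 0"
    using assms(1) unfolding alg_closed_def by blast
  then have sum_0: "(\<Sum>i<n. z ^ i) = 0"
    by (simp add: P_def poly_sum poly_monom)
  then have "z \<noteq> 1"
    using assms(3) by auto
  with sum_0 have "z ^ n = 1"
    using geometric_sum[of z n] by simp
  then show thesis
    using \<open>z \<noteq> 1\<close> that by blast
qed

context
  fixes p :: nat
  assumes prime: "prime p" and alg_closed: "alg_closed TYPE('a::field)"
    and p_nonzero: "(of_nat p :: 'a) \<noteq> 0"
begin

lemma exists_root_of_unity_not_of_smaller_order:
  "\<exists>z::'a. z ^ (p ^ m) = 1 \<and> (m > 0 \<longrightarrow> z ^ (p ^ (m - 1)) \<noteq> 1)"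
proof (induction m)
  case (Suc m)
  show ?case
  proof (cases "m = 0")
    case True
    obtain z :: 'a where "z ^ p = 1" "z \<noteq> 1"
      using alg_closed_nontrivial_root_of_unity[OF alg_closed _ p_nonzero] prime_ge_2_nat[OF prime]
      by blast
    then show ?thesis
      using True by auto
  next
    case False
    then obtain z :: 'a where z: "z ^ (p ^ m) = 1" "z ^ (p ^ (m - 1)) \<noteq> 1"
      using Suc.IH by blast
    obtain y :: 'a where y: "y ^ p = z"
      using alg_closed_nth_root[OF alg_closed] prime_gt_0_nat[OF prime] by blast
    have "p ^ Suc m = p * p ^ m" "p ^ m = p * p ^ (m - 1)"
      using False by (simp_all flip: power_Suc)
    then show ?thesis
      using y z by (auto simp: power_mult)
  qed
qed (auto intro: exI[of _ 1])

lemma exists_primitive_root_of_unity: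
  "\<exists>z::'a. z ^ (p ^ m) = 1 \<and> (\<forall>k. z ^ k = 1 \<longrightarrow> p ^ m dvd k)"
proof -
  obtain z :: 'a where z: "z ^ (p ^ m) = 1" "m > 0 \<longrightarrow> z ^ (p ^ (m - 1)) \<noteq> 1"
    using exists_root_of_unity_not_of_smaller_order by blast
  have "p ^ m dvd k" if "z ^ k = 1" for k
  proof (rule ccontr)
    assume not_dvd: "\<not> p ^ m dvd k"
    obtain a b where ab: "p ^ m * a = k * b + gcd (p ^ m) k"
      using bezout_nat[of "p ^ m" k] prime_gt_0_nat[OF prime] by auto
    have "z ^ (p ^ m * a) = z ^ (k * b) * z ^ gcd (p ^ m) k"
      unfolding ab by (simp add: power_add)
    then have z_gcd: "z ^ gcd (p ^ m) k = 1"
      using z(1) that by (simp add: power_mult)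
    obtain j where j: "j \<le> m" "gcd (p ^ m) k = p ^ j"
      using divides_primepow_nat[OF prime, of "gcd (p ^ m) k" m] by auto
    then have "j < m"
      using not_dvd by (metis gcd_dvd2 le_neq_implies_less)
    then have "p ^ j dvd p ^ (m - 1)"
      by (simp add: le_imp_power_dvd)
    then have "z ^ (p ^ (m - 1)) = 1"
      using z_gcd j(2) by (auto elim!: dvdE simp: power_mult)
    then show False
      using z(2) \<open>j < m\<close> by simp
  qed
  then show ?thesis
    using z(1) by blast
qed

lemma finite_roots_C: "finite (roots_C p m :: 'a set)" and card_roots_C_le: "card (roots_C p m :: 'a set) \<le> p ^ m"
proof -
  define P :: "'a poly" where "P = monom 1 (p ^ m) - 1"
  have "coeff P (p ^ m) = 1"
    using prime_gt_0_nat[OF prime] by (simp add: P_def)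
  then have "P \<noteq> 0"
    by auto
  moreover have "degree P \<le> p ^ m"
    unfolding P_def by (intro degree_diff_le degree_monom_le) simp
  moreover have "roots_C p m = {w. poly P w = 0}"
    by (simp add: roots_C_def P_def poly_monom)
  ultimately show "finite (roots_C p m :: 'a set)" "card (roots_C p m :: 'a set) \<le> p ^ m"
    using card_poly_roots_bound poly_roots_finite by (metis le_trans)+
qed

lemma roots_C_eq_powers:
  assumes z: "z ^ (p ^ m) = (1::'a)" "\<forall>k. z ^ k = 1 \<longrightarrow> p ^ m dvd k"
  shows "bij_betw (\<lambda>i. z ^ i) {..<p ^ m} (roots_C p m)"
proof -
  have "z \<noteq> 0"
    using z(1) prime_gt_0_nat[OF prime] by (auto simp: power_0_left)
  have inj: "inj_on (\<lambda>i. z ^ i) {..<p ^ m}"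
  proof (rule linorder_inj_onI')
    fix i j
    assume "i \<in> {..<p ^ m}" "j \<in> {..<p ^ m}" "i < j"
    then have "\<not> p ^ m dvd j - i"
      by (auto dest: dvd_imp_le)
    then have "z ^ (j - i) \<noteq> 1"
      using z(2) by blast
    then show "z ^ i \<noteq> z ^ j"
      using \<open>i < j\<close> \<open>z \<noteq> 0\<close> by (auto simp: power_diff)
  qed
  have "(z ^ i) ^ (p ^ m) = 1" for i
    by (metis mult.commute power_mult power_one z(1))
  then have sub: "(\<lambda>i. z ^ i) ` {..<p ^ m} \<subseteq> roots_C p m"
    by (auto simp: roots_C_def)
  have "card ((\<lambda>i. z ^ i) ` {..<p ^ m}) = card (roots_C p m :: 'a set)"
    using card_image[OF inj] card_mono[OF finite_roots_C sub] card_roots_C_le[of m] by simp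
  then have "(\<lambda>i. z ^ i) ` {..<p ^ m} = roots_C p m"
    by (rule card_subset_eq[OF finite_roots_C sub])
  with inj show ?thesis
    by (simp add: bij_betw_def)
qed

lemma sum_roots_C_power:
  "(\<Sum>w\<in>roots_C p m. (w::'a) ^ k) = (if p ^ m dvd k then of_nat (p ^ m) else 0)"
proof -
  obtain z :: 'a where z: "z ^ (p ^ m) = 1" "\<forall>k. z ^ k = 1 \<longrightarrow> p ^ m dvd k"
    using exists_primitive_root_of_unity by blast
  have "(\<Sum>w\<in>roots_C p m. w ^ k) = (\<Sum>i<p ^ m. (z ^ k) ^ i)"
    using sum.reindex_bij_betw[OF roots_C_eq_powers[OF z], of "\<lambda>w. w ^ k"]
    by (simp add: power_mult[symmetric] mult.commute)
  also have "\<dots> = (if p ^ m dvd k then of_nat (p ^ m) else 0)"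
  proof (cases "p ^ m dvd k")
    case True
    then have "z ^ k = 1"
      using z(1) by (auto elim!: dvdE simp: power_mult)
    then show ?thesis
      using True by simp
  next
    case False
    then have "z ^ k \<noteq> 1"
      using z(2) by blast
    moreover have "(z ^ k) ^ (p ^ m) = 1"
      by (metis mult.commute power_mult power_one z(1))
    ultimately show ?thesis
      using False geometric_sum[of "z ^ k" "p ^ m"] by simp
  qed
  finally show ?thesis .
qed

lemma sum_roots_C_inverse_power_mult_power:
  "(\<Sum>w\<in>roots_C p m. inverse (w::'a) ^ r * w ^ y)
     = (if y mod p ^ m = r mod p ^ m then of_nat (p ^ m) else 0)"
proof -
  have pm: "p ^ m \<ge> 1"
    using prime_gt_0_nat[OF prime] by simp
  have pow: "inverse w ^ r * w ^ y = w ^ (y + (p ^ m - 1) * r)" if "w \<in> roots_C p m" for w :: 'a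
  proof -
    have "w * w ^ (p ^ m - 1) = w ^ (p ^ m)"
      using pm by (metis Suc_diff_1 less_le_trans power_Suc zero_less_one)
    then have "w * w ^ (p ^ m - 1) = 1"
      using that by (simp add: roots_C_def)
    then have "inverse w = w ^ (p ^ m - 1)"
      by (metis inverse_unique)
    then show ?thesis
      by (simp add: power_add power_mult)
  qed
  have "(\<Sum>w\<in>roots_C p m. inverse w ^ r * w ^ y) = (\<Sum>w\<in>roots_C p m. (w::'a) ^ (y + (p ^ m - 1) * r))"
    by (rule sum.cong[OF refl pow])
  also have "\<dots> = (if p ^ m dvd y + (p ^ m - 1) * r then of_nat (p ^ m) else 0)"
    by (rule sum_roots_C_power)
  also have "p ^ m dvd y + (p ^ m - 1) * r \<longleftrightarrow> y mod p ^ m = r mod p ^ m"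
  proof -
    have "int (y + (p ^ m - 1) * r) = (int y - int r) + int r * int (p ^ m)"
      using pm by (simp only: of_nat_add of_nat_mult of_nat_diff of_nat_1) (simp add: algebra_simps)
    then have "p ^ m dvd y + (p ^ m - 1) * r \<longleftrightarrow> int (p ^ m) dvd int y - int r"
      by (metis dvd_add_times_triv_right_iff int_dvd_int_iff)
    also have "\<dots> \<longleftrightarrow> y mod p ^ m = r mod p ^ m"
      by (metis mod_eq_dvd_iff of_nat_eq_iff of_nat_mod)
    finally show ?thesis .
  qed
  finally show ?thesis .
qed

end

section \<open>The \<open>p\<close>-adic absolute value\<close>

locale Cp_valued =
  fixes p :: nat and v :: "'a::field \<Rightarrow> real"
  assumes Cp: "Cp_field p v"

sublocale Cp_valued \<subseteq> complete_nonarch_valued v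
  using Cp by unfold_locales (simp_all add: Cp_field_def)

context Cp_valued
begin

lemma prime_p: "prime p"
  using Cp by (simp add: Cp_field_def)

lemma p_ge_2: "p \<ge> 2"
  using prime_p prime_ge_2_nat by blast

lemma v_of_int: "a \<noteq> 0 \<Longrightarrow> v (of_int a) = inverse (real p ^ multiplicity (int p) a)"
  using Cp by (simp add: Cp_field_def)

lemma v_of_nat: "n \<noteq> 0 \<Longrightarrow> v (of_nat n) = inverse (real p ^ multiplicity (int p) (int n))"
  using v_of_int[of "int n"] by simp

lemma of_nat_eq_0_iff [simp]: "(of_nat n :: 'a) = 0 \<longleftrightarrow> n = 0"
  using v_of_nat[of n] p_ge_2 by (cases "n = 0") auto

lemma v_of_nat_p: "v (of_nat p) = 1 / real p"
  using v_of_nat[of p] p_ge_2 prime_p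
  by (simp add: multiplicity_prime prime_nat_iff_prime divide_inverse)

lemma v_of_nat_p_power: "v (of_nat (p ^ n)) = (1 / real p) ^ n"
  unfolding of_nat_power v_power v_of_nat_p ..

lemma v_of_nat_coprime: "\<not> p dvd n \<Longrightarrow> v (of_nat n) = 1"
  using v_of_nat[of n] by (cases "n = 0") (simp_all add: not_dvd_imp_multiplicity_0)

lemma v_of_int_le_iff_dvd: "v (of_int a) \<le> (1 / real p) ^ m \<longleftrightarrow> int p ^ m dvd a"
proof
  assume "int p ^ m dvd a"
  then obtain b where "a = int p ^ m * b"
    by (auto elim: dvdE)
  then have "v (of_int a) = (1 / real p) ^ m * v (of_int b)"
    using v_of_nat_p_power[of m] by (simp add: v_mult)
  also have "\<dots> \<le> (1 / real p) ^ m"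
    using v_of_int_le_1[of b] by (simp add: mult_left_le)
  finally show "v (of_int a) \<le> (1 / real p) ^ m" .
next
  assume le: "v (of_int a) \<le> (1 / real p) ^ m"
  show "int p ^ m dvd a"
  proof (cases "a = 0")
    case False
    then have "inverse (real p ^ multiplicity (int p) a) \<le> inverse (real p ^ m)"
      using le v_of_int by (simp add: power_one_over divide_inverse power_inverse)
    then have "m \<le> multiplicity (int p) a"
      using p_ge_2 by (simp add: inverse_le_iff_le power_increasing_iff)
    then show ?thesis
      by (rule multiplicity_dvd')
  qed simp
qed

lemma v_of_nat_p_power_mult_le: "v (of_nat (p ^ n * j)) \<le> (1 / real p) ^ n"
  using v_of_nat_le_1[of j] p_ge_2 by (simp only: of_nat_mult v_mult v_of_nat_p_power) (simp add: mult_left_le)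

lemma v_of_nat_diff_le_iff_mod_eq:
  "v (of_nat a - of_nat b) \<le> (1 / real p) ^ m \<longleftrightarrow> a mod p ^ m = b mod p ^ m"
proof -
  have "v (of_nat a - of_nat b) \<le> (1 / real p) ^ m \<longleftrightarrow> int p ^ m dvd int a - int b"
    using v_of_int_le_iff_dvd[of "int a - int b"] by simp
  also have "\<dots> \<longleftrightarrow> a mod p ^ m = b mod p ^ m"
    by (metis mod_eq_dvd_iff of_nat_eq_iff of_nat_mod of_nat_power)
  finally show ?thesis .
qed

lemma p_power_tendsto_0: "(\<lambda>n. (1 / real p) ^ n) \<longlonglongrightarrow> 0"
  using p_ge_2 by (intro LIMSEQ_power_zero) auto

lemma p_power_eventually_less: "d > 0 \<Longrightarrow> \<exists>N. \<forall>n\<ge>N. (1 / real p) ^ n < d"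
  using order_tendstoD(2)[OF p_power_tendsto_0] by (simp add: eventually_sequentially)

lemma vconv_dominated_p_power:
  assumes "\<And>n. v (s n - L) \<le> C * (1 / real p) ^ n"
  shows "vconv v s L"
  by (rule vconv_dominated[OF always_eventually tendsto_mult_right_zero[OF p_power_tendsto_0]])
    (use assms in auto)

section \<open>The \<open>p\<close>-adic logarithm and exponential\<close>

text \<open>\<open>rho\<close> is the radius of convergence of the \<open>p\<close>-adic exponential series.\<close>

definition rho :: real where
  "rho = real p powr (-1 / (real p - 1))"

lemma rho_pos: "0 < rho"
  using p_ge_2 by (simp add: rho_def)

lemma rho_less_1: "rho < 1"
  unfolding rho_def using p_ge_2 by (intro powr_less_one) auto

lemma rho_power_p_minus_1: "rho ^ (p - 1) = 1 / real p"
proof -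
  have "rho ^ (p - 1) = real p powr (real (p - 1) * (-1 / (real p - 1)))"
    unfolding rho_def using p_ge_2 by (subst powr_power) auto
  also have "real (p - 1) * (-1 / (real p - 1)) = -1"
    using p_ge_2 by (simp add: of_nat_diff)
  finally show ?thesis
    by (simp add: powr_minus_divide)
qed

lemma v_fact_eq: "v (of_nat (fact n)) = (1 / real p) ^ (n div p) * v (of_nat (fact (n div p)))"
proof (induction n)
  case (Suc n)
  show ?case
  proof (cases "p dvd Suc n")
    case False
    then have "Suc n div p = n div p"
      by (simp add: div_Suc dvd_eq_mod_eq_0)
    moreover have "v (of_nat (fact (Suc n))) = v (of_nat (Suc n)) * v (of_nat (fact n))"
      by (simp only: fact_Suc of_nat_mult v_mult of_nat_id)
    ultimately show ?thesis
      using Suc v_of_nat_coprime[OF False] by simp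
  next
    case True
    then obtain k where k: "Suc n = p * k"
      by (auto elim: dvdE)
    then have "k > 0"
      by (cases k) auto
    have "Suc n div p = k"
      using k p_ge_2 by simp
    have "n = (p - 1) + p * (k - 1)"
      using k \<open>k > 0\<close> p_ge_2 by (cases k) (auto simp: algebra_simps)
    then have "n div p = k - 1"
      using div_mult_self2[of p "p - 1" "k - 1"] p_ge_2 by simp
    have "v (of_nat (fact (Suc n))) = v (of_nat (Suc n)) * v (of_nat (fact n))"
      by (simp only: fact_Suc of_nat_mult v_mult of_nat_id)
    also have "\<dots> = 1 / real p * v (of_nat k) * ((1 / real p) ^ (k - 1) * v (of_nat (fact (k - 1))))"
      using Suc \<open>n div p = k - 1\<close> by (simp only: k of_nat_mult v_mult v_of_nat_p)
    also have "\<dots> = (1 / real p) ^ k * (v (of_nat k) * v (of_nat (fact (k - 1))))"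
      using \<open>k > 0\<close> by (cases k) simp_all
    also have "v (of_nat k) * v (of_nat (fact (k - 1))) = v (of_nat (fact k))"
      using \<open>k > 0\<close> by (simp add: fact_reduce[of k] v_mult)
    finally show ?thesis
      using \<open>Suc n div p = k\<close> by simp
  qed
qed simp

lemma v_fact_ge: "n \<ge> 1 \<Longrightarrow> v (of_nat (fact n)) \<ge> rho ^ (n - 1)"
proof (induction n rule: less_induct)
  case (less n)
  define m where "m = n div p"
  show ?case
  proof (cases "m = 0")
    case True
    then show ?thesis
      using v_fact_eq[of n] rho_pos rho_less_1 by (simp add: m_def power_le_one)
  next
    case False
    have "m < n"
      using p_ge_2 less.prems by (simp add: m_def)
    then have IH: "v (of_nat (fact m)) \<ge> rho ^ (m - 1)"
      using less.IH False by simp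
    have "p * m \<le> n"
      unfolding m_def by (metis div_times_less_eq_dividend mult.commute)
    then have "rho ^ (n - 1) \<le> rho ^ (p * m - 1)"
      using rho_pos rho_less_1 by (intro power_decreasing) auto
    also have "p * m - 1 = (p - 1) * m + (m - 1)"
      using False p_ge_2 by (simp add: algebra_simps diff_mult_distrib)
    also have "rho ^ \<dots> = (1 / real p) ^ m * rho ^ (m - 1)"
      unfolding power_add power_mult rho_power_p_minus_1 ..
    also have "\<dots> \<le> (1 / real p) ^ m * v (of_nat (fact m))"
      using IH by (intro mult_left_mono) auto
    also have "\<dots> = v (of_nat (fact n))"
      using v_fact_eq[of n] by (simp add: m_def)
    finally show ?thesis .
  qed
qed

lemma v_of_nat_ge: "n \<ge> 1 \<Longrightarrow> v (of_nat n) \<ge> rho ^ (n - 1)"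
proof -
  assume "n \<ge> 1"
  then have "v (of_nat (fact n)) = v (of_nat n) * v (of_nat (fact (n - 1)))"
    by (simp add: fact_reduce v_mult)
  also have "\<dots> \<le> v (of_nat n)"
    using v_of_nat_le_1[of "fact (n - 1)"] by (simp add: mult_left_le)
  finally show ?thesis
    using v_fact_ge[OF \<open>n \<ge> 1\<close>] by linarith
qed

lemma v_log_term_le:
  "v ((-1) ^ n * z ^ Suc n / of_nat (Suc n)) \<le> v z * (v z / rho) ^ n"
proof -
  have "v ((-1) ^ n * z ^ Suc n / of_nat (Suc n)) = v z ^ Suc n / v (of_nat (Suc n))"
    by (simp add: v_divide v_mult v_power v_minus_1 del: of_nat_Suc)
  also have "\<dots> \<le> v z ^ Suc n / rho ^ n"
    using v_of_nat_ge[of "Suc n"] zero_less_power[OF rho_pos, of n]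
    by (intro divide_left_mono mult_pos_pos) auto
  also have "\<dots> = v z * (v z / rho) ^ n"
    by (simp add: power_divide)
  finally show ?thesis .
qed

lemma v_exp_term_le:
  assumes "n \<ge> 1"
  shows "v (y ^ n / of_nat (fact n)) \<le> rho * (v y / rho) ^ n"
proof -
  have "v (y ^ n / of_nat (fact n)) = v y ^ n / v (of_nat (fact n))"
    by (simp add: v_divide v_power)
  also have "\<dots> \<le> v y ^ n / rho ^ (n - 1)"
    using v_fact_ge[OF assms] zero_less_power[OF rho_pos, of "n - 1"]
    by (intro divide_left_mono mult_pos_pos) auto
  also have "\<dots> = rho * (v y / rho) ^ n"
    using assms rho_pos by (cases n) (simp_all add: power_divide)
  finally show ?thesis .
qed

lemma log_terms_tendsto_0:
  "v z < rho \<Longrightarrow> (\<lambda>n. v ((-1) ^ n * z ^ Suc n / of_nat (Suc n))) \<longlonglongrightarrow> 0"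
  by (rule tendsto_sandwich[OF _ always_eventually[OF allI[OF v_log_term_le]] tendsto_const
        geometric_tendsto_0]) (use rho_pos in auto)

lemma exp_terms_tendsto_0:
  "v y < rho \<Longrightarrow> (\<lambda>n. v (y ^ n / of_nat (fact n))) \<longlonglongrightarrow> 0"
  by (rule tendsto_sandwich[OF _ eventually_mono[OF eventually_ge_at_top[of 1] v_exp_term_le]
        tendsto_const geometric_tendsto_0]) (use rho_pos in auto)

lemma v_plog_minus_le:
  assumes "v z < rho"
  shows "v (plog v (1 + z) - z) \<le> v z / rho * v z"
proof -
  have "v (vsuminf v (\<lambda>n. (-1) ^ n * z ^ Suc n / of_nat (Suc n))
          - (\<Sum>n<1. (-1) ^ n * z ^ Suc n / of_nat (Suc n))) \<le> v z * (v z / rho)"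
  proof (rule v_vsuminf_minus_partial_sum_le[OF log_terms_tendsto_0[OF assms]])
    fix n :: nat
    assume "1 \<le> n"
    then have "v z * (v z / rho) ^ n \<le> v z * (v z / rho) ^ 1"
      using assms rho_pos by (intro mult_left_mono power_decreasing) auto
    then show "v ((-1) ^ n * z ^ Suc n / of_nat (Suc n)) \<le> v z * (v z / rho)"
      using v_log_term_le[of n z] by simp
  qed (use rho_pos in simp)
  then show ?thesis
    by (simp add: plog_def mult.commute)
qed

lemma v_plog: "v z < rho \<Longrightarrow> v (plog v (1 + z)) = v z"
  using v_plog_minus_le rho_pos by (intro v_eq_if_v_diff_le[where c = "v z / rho"]) auto

lemma v_pexp_minus_le:
  assumes "v y < rho"
  shows "v (pexp v y - (1 + y)) \<le> v y / rho * v y"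
proof -
  have "v (vsuminf v (\<lambda>n. y ^ n / of_nat (fact n)) - (\<Sum>n<2. y ^ n / of_nat (fact n)))
          \<le> v y * (v y / rho)"
  proof (rule v_vsuminf_minus_partial_sum_le[OF exp_terms_tendsto_0[OF assms]])
    fix n :: nat
    assume n: "2 \<le> n"
    then have "v (y ^ n / of_nat (fact n)) \<le> rho * (v y / rho) ^ n"
      by (intro v_exp_term_le) simp
    also have "\<dots> \<le> rho * (v y / rho) ^ 2"
      using assms rho_pos n by (intro mult_left_mono power_decreasing) auto
    also have "\<dots> = v y * (v y / rho)"
      using rho_pos by (simp add: power2_eq_square)
    finally show "v (y ^ n / of_nat (fact n)) \<le> v y * (v y / rho)" .
  qed (use rho_pos in simp)
  then show ?thesis
    by (simp add: pexp_def numeral_2_eq_2 mult.commute)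
qed

lemma v_pexp_minus_1: "v y < rho \<Longrightarrow> v (pexp v y - 1) = v y"
  using v_pexp_minus_le rho_pos
  by (intro v_eq_if_v_diff_le[where c = "v y / rho"]) (auto simp: diff_diff_eq)

lemma pexp_0 [simp]: "pexp v 0 = 1"
  using v_pexp_minus_1[of 0] rho_pos by simp

lemma exp_term_binomial:
  fixes x y :: 'a
  shows "(x + y) ^ n / of_nat (fact n)
     = (\<Sum>k\<le>n. x ^ k / of_nat (fact k) * (y ^ (n - k) / of_nat (fact (n - k))))"
proof -
  have "(x + y) ^ n / of_nat (fact n) = (\<Sum>k\<le>n. of_nat (n choose k) * x ^ k * y ^ (n - k) / of_nat (fact n))"
    by (simp only: binomial_ring sum_divide_distrib)
  also have "\<dots> = (\<Sum>k\<le>n. x ^ k / of_nat (fact k) * (y ^ (n - k) / of_nat (fact (n - k))))"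
  proof (rule sum.cong[OF refl])
    fix k
    assume "k \<in> {..n}"
    then have "k \<le> n"
      by simp
    then have "(of_nat (fact n) :: 'a) = of_nat (fact k) * of_nat (fact (n - k)) * of_nat (n choose k)"
      using binomial_fact_lemma[of k n] by (metis of_nat_mult)
    with \<open>k \<le> n\<close> show "of_nat (n choose k) * x ^ k * y ^ (n - k) / of_nat (fact n)
                 = x ^ k / of_nat (fact k) * (y ^ (n - k) / of_nat (fact (n - k)))"
      by (simp add: field_simps)
  qed
  finally show ?thesis .
qed

lemma pexp_add:
  assumes "v x < rho" "v y < rho"
  shows "pexp v (x + y) = pexp v x * pexp v y"
proof -
  have "vconv v (\<lambda>N. \<Sum>n<N. (x + y) ^ n / of_nat (fact n)) (pexp v x * pexp v y)"
    unfolding pexp_def exp_term_binomial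
    by (rule vsuminf_Cauchy_product[OF exp_terms_tendsto_0[OF assms(1)] exp_terms_tendsto_0[OF assms(2)]])
  then show ?thesis
    unfolding pexp_def vsuminf_def by (rule vlim_eq)
qed

lemma v_div_pexp_minus_1_minus_1:
  assumes "v y < rho" "y \<noteq> 0"
  shows "v (y / (pexp v y - 1) - 1) \<le> v y / rho"
proof -
  have "pexp v y - 1 \<noteq> 0"
    using v_pexp_minus_1[OF assms(1)] assms(2) by (metis v_eq_0_iff)
  then have "y / (pexp v y - 1) - 1 = - (pexp v y - (1 + y)) / (pexp v y - 1)"
    by (simp add: field_simps)
  also have "v \<dots> \<le> v y / rho"
    using v_pexp_minus_le[OF assms(1)] v_pexp_minus_1[OF assms(1)] v_pos[OF assms(2)]
      v_minus_commute[of "1 + y"]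
    by (simp add: v_divide pos_divide_le_eq)
  finally show ?thesis .
qed

section \<open>\<open>\<int>\<^sub>p\<close> and the powers \<open>w^x\<close>\<close>

lemma v_le_1_if_in_Zp: "x \<in> Zp v \<Longrightarrow> v x \<le> 1"
  unfolding Zp_def using vconv_limit_le[of _ x 0 1] v_of_int_le_1 by auto

lemma of_nat_in_Zp: "of_nat n \<in> Zp v"
  unfolding Zp_def using vconv_const[of "of_nat n"] by (auto intro!: exI[of _ "\<lambda>_. int n"])

lemma Zp_residue_approx:
  assumes "x \<in> Zp v"
  obtains r where "r < p ^ m" "v (x - of_nat r) \<le> (1 / real p) ^ m"
proof -
  obtain s where s: "vconv v (\<lambda>n. of_int (s n)) x"
    using assms by (auto simp: Zp_def)
  obtain N where N: "v (of_int (s N) - x) < (1 / real p) ^ m"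
    using s p_ge_2 unfolding vconv_iff by force
  define r where "r = nat (s N mod int (p ^ m))"
  have r: "int r = s N mod int (p ^ m)" and "r < p ^ m"
    using p_ge_2 by (simp_all add: r_def nat_less_iff)
  then have "v (of_int (s N - int r)) \<le> (1 / real p) ^ m"
    unfolding v_of_int_le_iff_dvd r by (simp add: mod_eq_dvd_iff[symmetric])
  then have "v (x - of_nat r) \<le> (1 / real p) ^ m"
    using N v_diff_le_max[of x "of_nat r" "of_int (s N)"] v_minus_commute[of x "of_int (s N)"]
    by simp
  with \<open>r < p ^ m\<close> show thesis
    by (rule that)
qed

lemma Zp_nat_sequence:
  assumes "x \<in> Zp v"
  obtains r where "\<And>m. r m < p ^ m" "\<And>m. v (x - of_nat (r m)) \<le> (1 / real p) ^ m"
    "vconv v (\<lambda>m. of_nat (r m)) x"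
proof -
  have "\<forall>m. \<exists>r. r < p ^ m \<and> v (x - of_nat r) \<le> (1 / real p) ^ m"
    using Zp_residue_approx[OF assms] by metis
  then obtain r where r: "\<And>m. r m < p ^ m" "\<And>m. v (x - of_nat (r m)) \<le> (1 / real p) ^ m"
    by metis
  moreover have "vconv v (\<lambda>m. of_nat (r m)) x"
    using r(2) v_minus_commute by (intro vconv_dominated_p_power[where C = 1]) simp
  ultimately show thesis
    by (rule that)
qed

lemma power_vconv_if_residue:
  assumes w: "w ^ (p ^ m) = 1" and r: "v (x - of_nat r) \<le> (1 / real p) ^ m"
    and s: "vconv v (\<lambda>k. of_nat (s k)) x"
  shows "vconv v (\<lambda>k. w ^ s k) (w ^ r)"
proof (rule vconv_eventually_eq[OF vconv_const])
  have "\<forall>\<^sub>F k in sequentially. v (of_nat (s k) - x) < (1 / real p) ^ m"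
    using s p_ge_2 unfolding vconv_def by (intro order_tendstoD(2)) auto
  then show "\<forall>\<^sub>F k in sequentially. w ^ s k = w ^ r"
  proof eventually_elim
    case (elim k)
    then have "v (of_nat (s k) - of_nat r) \<le> (1 / real p) ^ m"
      using r v_diff_le_max[of "of_nat (s k)" "of_nat r" x] by simp
    then have "s k mod p ^ m = r mod p ^ m"
      by (simp add: v_of_nat_diff_le_iff_mod_eq)
    then show ?case
      using power_eq_power_mod[OF w] by metis
  qed
qed

lemma upow_eq_power:
  assumes w: "w ^ (p ^ m) = 1" and x: "x \<in> Zp v" and r: "v (x - of_nat r) \<le> (1 / real p) ^ m"
  shows "upow v w x = w ^ r"
  unfolding upow_def
proof (rule the_equality)
  show "\<forall>s. vconv v (\<lambda>k. of_nat (s k)) x \<longrightarrow> vconv v (\<lambda>k. w ^ s k) (w ^ r)"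
    using power_vconv_if_residue[OF w r] by blast
next
  fix L
  assume L: "\<forall>s. vconv v (\<lambda>k. of_nat (s k)) x \<longrightarrow> vconv v (\<lambda>k. w ^ s k) L"
  obtain s where "vconv v (\<lambda>k. of_nat (s k)) x"
    using Zp_nat_sequence[OF x] by metis
  then show "L = w ^ r"
    using L power_vconv_if_residue[OF w r] vconv_unique by blast
qed

lemma upow_of_nat: "w ^ (p ^ m) = 1 \<Longrightarrow> upow v w (of_nat n) = w ^ n"
  using upow_eq_power[of w m "of_nat n" n] of_nat_in_Zp p_ge_2 by simp

lemma alg_closed: "alg_closed TYPE('a)"
  using Cp by (simp add: Cp_field_def)

lemma sum_roots_C_orthogonality:
  "(\<Sum>w\<in>roots_C p m. inverse (w::'a) ^ r * w ^ y)
     = (if y mod p ^ m = r mod p ^ m then of_nat (p ^ m) else 0)"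
  using sum_roots_C_inverse_power_mult_power[OF prime_p alg_closed] p_ge_2 by simp

end

section \<open>The function \<open>q^x\<close>\<close>

locale q_exponential = Cp_valued p v for p :: nat and v :: "'a::field \<Rightarrow> real" +
  fixes q :: 'a
  assumes v_q_minus_1_less: "v (q - 1) < rho" and q_ne_1: "q \<noteq> 1"
begin

lemma v_plog_q: "v (plog v q) = v (q - 1)"
  using v_plog[OF v_q_minus_1_less] by simp

lemma plog_q_nonzero: "plog v q \<noteq> 0"
  using v_plog_q q_ne_1 by (metis right_minus_eq v_eq_0_iff)

lemma v_mult_q_minus_1_le: "v t \<le> 1 \<Longrightarrow> v t * v (q - 1) \<le> v (q - 1)"
  by (simp add: mult_left_le_one_le)

lemma v_mult_plog_q_less:
  assumes "v t \<le> 1"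
  shows "v (t * plog v q) < rho"
  using v_mult_q_minus_1_le[OF assms] v_q_minus_1_less by (simp add: v_mult v_plog_q)

lemma qpow_add: "v s \<le> 1 \<Longrightarrow> v t \<le> 1 \<Longrightarrow> qpow v q (s + t) = qpow v q s * qpow v q t"
  unfolding qpow_def by (simp add: distrib_right pexp_add v_mult_plog_q_less)

lemma v_qpow_minus_1:
  assumes "v t \<le> 1"
  shows "v (qpow v q t - 1) = v t * v (q - 1)"
  using v_pexp_minus_1[OF v_mult_plog_q_less[OF assms]] by (simp add: qpow_def v_mult v_plog_q)

lemma v_qpow_minus_1_less_1: "v t \<le> 1 \<Longrightarrow> v (qpow v q t - 1) < 1"
  using v_qpow_minus_1 v_mult_q_minus_1_le v_q_minus_1_less rho_less_1 by fastforce

lemma v_qpow: "v t \<le> 1 \<Longrightarrow> v (qpow v q t) = 1"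
  using v_add_eq_dominant[of "qpow v q t - 1" 1] v_qpow_minus_1_less_1 by simp

lemma v_qpow_of_nat [simp]: "v (qpow v q (of_nat n)) = 1"
  by (rule v_qpow[OF v_of_nat_le_1])

lemma qpow_0 [simp]: "qpow v q 0 = 1"
  by (simp add: qpow_def)

lemma qpow_of_nat: "qpow v q (of_nat n) = qpow v q 1 ^ n"
proof (induction n)
  case (Suc n)
  then show ?case
    using qpow_add[of "of_nat n" 1] v_of_nat_le_1[of n] by (simp add: add.commute)
qed simp

lemma qpow_of_nat_add: "qpow v q (of_nat (a + b)) = qpow v q (of_nat a) * qpow v q (of_nat b)"
  unfolding qpow_of_nat power_add ..

lemma qpow_of_nat_mult: "qpow v q (of_nat (a * b)) = qpow v q (of_nat a) ^ b"
  unfolding qpow_of_nat power_mult ..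

lemma v_qpow_diff_le:
  assumes "v s \<le> 1" "v t \<le> 1"
  shows "v (qpow v q s - qpow v q t) \<le> v (s - t)"
proof -
  have st: "v (s - t) \<le> 1"
    using assms by (rule v_diff_le)
  have "qpow v q s - qpow v q t = qpow v q t * (qpow v q (s - t) - 1)"
    using qpow_add[OF assms(2) st] by (simp add: algebra_simps)
  then have "v (qpow v q s - qpow v q t) = v (s - t) * v (q - 1)"
    by (simp add: v_mult v_qpow[OF assms(2)] v_qpow_minus_1[OF st])
  also have "\<dots> \<le> v (s - t)"
    using v_q_minus_1_less rho_less_1 by (simp add: mult_left_le)
  finally show ?thesis .
qed

lemma v_qpow_p_power_mult_minus_1_le: "v (qpow v q (of_nat (p ^ N * j)) - 1) \<le> (1 / real p) ^ N"
proof -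
  have "v (qpow v q (of_nat (p ^ N * j)) - 1) = v (of_nat (p ^ N * j)) * v (q - 1)"
    by (rule v_qpow_minus_1[OF v_of_nat_le_1])
  also have "\<dots> \<le> v (of_nat (p ^ N * j))"
    using v_q_minus_1_less rho_less_1 by (simp add: mult_left_le)
  also have "\<dots> \<le> (1 / real p) ^ N"
    by (rule v_of_nat_p_power_mult_le)
  finally show ?thesis .
qed

lemma p_power_div_qpow_minus_1_vconv:
  "vconv v (\<lambda>m. of_nat (p ^ m) / (qpow v q (of_nat (p ^ m)) - 1)) (inverse (plog v q))"
proof (rule vconv_dominated_p_power[where C = "1 / rho"])
  fix m
  define y where "y = of_nat (p ^ m) * plog v q"
  have y: "v y < rho" "y \<noteq> 0" "v y = (1 / real p) ^ m * v (plog v q)"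
    using v_mult_plog_q_less[OF v_of_nat_le_1[of "p ^ m"]] plog_q_nonzero p_ge_2
    by (simp_all add: y_def v_mult v_of_nat_p_power del: of_nat_power)
  have "of_nat (p ^ m) / (qpow v q (of_nat (p ^ m)) - 1) - inverse (plog v q)
          = inverse (plog v q) * (y / (pexp v y - 1) - 1)"
    using plog_q_nonzero by (simp add: y_def qpow_def field_simps)
  also have "v \<dots> \<le> inverse (v (plog v q)) * (v y / rho)"
    unfolding v_mult v_inverse using v_div_pexp_minus_1_minus_1[OF y(1,2)]
    by (intro mult_left_mono) simp_all
  also have "\<dots> = 1 / rho * (1 / real p) ^ m"
    using plog_q_nonzero y(3) by (simp add: field_simps)
  finally show "v (of_nat (p ^ m) / (qpow v q (of_nat (p ^ m)) - 1) - inverse (plog v q))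
                  \<le> 1 / rho * (1 / real p) ^ m" .
qed

lemma qnum_of_nat_mult:
  "qnum v q (of_nat (a * n)) = qnum v q (of_nat a) * (\<Sum>k<n. qpow v q (of_nat (a * k)))"
proof -
  have "1 - qpow v q (of_nat (a * n)) = (1 - qpow v q (of_nat a)) * (\<Sum>k<n. qpow v q (of_nat (a * k)))"
    by (simp only: qpow_of_nat_mult one_diff_power_eq)
  then show ?thesis
    by (simp add: qnum_def)
qed

lemma v_qnum_of_nat: "v (qnum v q (of_nat n)) = v (of_nat n)"
  using v_qpow_minus_1[OF v_of_nat_le_1, of n] q_ne_1
  by (simp add: qnum_def v_divide v_minus_commute[of 1])

lemma v_qnum_p_power: "v (qnum v q (of_nat (p ^ N))) = (1 / real p) ^ N"
  by (simp only: v_qnum_of_nat v_of_nat_p_power)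

lemma qnum_p_power_nonzero: "qnum v q (of_nat (p ^ N)) \<noteq> 0"
  using v_qnum_p_power[of N] p_ge_2 by (auto simp flip: v_eq_0_iff)

lemma v_sum_qpow_p_power_multiples:
  assumes "M \<le> N"
  shows "v (\<Sum>k<p ^ (N - M). qpow v q (of_nat (p ^ M * k))) = (1 / real p) ^ (N - M)"
proof -
  have "p ^ N = p ^ M * p ^ (N - M)"
    using assms by (simp flip: power_add)
  then have "(1 / real p) ^ N = (1 / real p) ^ M * v (\<Sum>k<p ^ (N - M). qpow v q (of_nat (p ^ M * k)))"
    using qnum_of_nat_mult[of "p ^ M" "p ^ (N - M)"] by (simp add: v_mult flip: v_qnum_p_power)
  moreover have "(1 / real p) ^ N = (1 / real p) ^ M * (1 / real p) ^ (N - M)"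
    using assms by (simp flip: power_add)
  ultimately show ?thesis
    using p_ge_2 by simp
qed

end

section \<open>Uniformly differentiable functions\<close>

locale ud_function = q_exponential p v q for p :: nat and v :: "'a::field \<Rightarrow> real" and q :: 'a +
  fixes f :: "'a \<Rightarrow> 'a"
  assumes UD: "UD v f"
begin

definition df :: "'a \<Rightarrow> 'a" where
  "df = (SOME f'. \<forall>e>0. \<exists>d>0. \<forall>a\<in>Zp v. \<forall>x\<in>Zp v. \<forall>y\<in>Zp v.
      x \<noteq> y \<and> v (x - a) < d \<and> v (y - a) < d \<longrightarrow> v ((f x - f y) / (x - y) - f' a) < e)"

lemma f_increment_approx:
  assumes "e > 0"
  obtains d where "d > 0"
    "\<And>a x. a \<in> Zp v \<Longrightarrow> x \<in> Zp v \<Longrightarrow> v (x - a) < d \<Longrightarrow>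
       v (f x - f a - (x - a) * df a) \<le> e * v (x - a)"
proof -
  have "\<forall>e>0. \<exists>d>0. \<forall>a\<in>Zp v. \<forall>x\<in>Zp v. \<forall>y\<in>Zp v.
      x \<noteq> y \<and> v (x - a) < d \<and> v (y - a) < d \<longrightarrow> v ((f x - f y) / (x - y) - df a) < e"
    using UD unfolding UD_def df_def by (rule someI_ex)
  then obtain d where "d > 0" and d: "\<forall>a\<in>Zp v. \<forall>x\<in>Zp v. \<forall>y\<in>Zp v.
      x \<noteq> y \<and> v (x - a) < d \<and> v (y - a) < d \<longrightarrow> v ((f x - f y) / (x - y) - df a) < e"
    using assms by blast
  have "v (f x - f a - (x - a) * df a) \<le> e * v (x - a)"
    if "a \<in> Zp v" "x \<in> Zp v" "v (x - a) < d" for a x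
  proof (cases "x = a")
    case False
    then have "f x - f a - (x - a) * df a = (x - a) * ((f x - f a) / (x - a) - df a)"
      by (simp add: field_simps)
    then have "v (f x - f a - (x - a) * df a) = v ((f x - f a) / (x - a) - df a) * v (x - a)"
      by (simp only: v_mult mult.commute)
    also have "\<dots> \<le> e * v (x - a)"
      using d[rule_format, of a x a] that False \<open>d > 0\<close> by (intro mult_right_mono) simp_all
    finally show ?thesis .
  qed simp
  with \<open>d > 0\<close> show thesis
    by (rule that)
qed

lemma df_uniformly_continuous:
  assumes "e > 0"
  obtains d where "d > 0" "\<And>a b. a \<in> Zp v \<Longrightarrow> b \<in> Zp v \<Longrightarrow> v (b - a) < d \<Longrightarrow> v (df b - df a) \<le> e"
proof -
  obtain d where "d > 0" and d: "\<And>a x. a \<in> Zp v \<Longrightarrow> x \<in> Zp v \<Longrightarrow> v (x - a) < d \<Longrightarrow>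
      v (f x - f a - (x - a) * df a) \<le> e * v (x - a)"
    using f_increment_approx[OF assms] by blast
  have "v (df b - df a) \<le> e" if "a \<in> Zp v" "b \<in> Zp v" "v (b - a) < d" for a b
  proof (cases "a = b")
    case False
    have eq: "(f b - f a - (b - a) * df a) + (f a - f b - (a - b) * df b) = (b - a) * (df b - df a)"
      by (simp add: algebra_simps)
    have "v (f b - f a - (b - a) * df a) \<le> e * v (b - a)"
      using d[OF that] .
    moreover have "v (f a - f b - (a - b) * df b) \<le> e * v (b - a)"
      using d[OF that(2,1)] that(3) v_minus_commute[of a b] by simp
    ultimately have "v ((b - a) * (df b - df a)) \<le> e * v (b - a)"
      unfolding eq[symmetric] by (rule v_add_le)
    then have "v (b - a) * v (df b - df a) \<le> e * v (b - a)"
      by (simp add: v_mult)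
    then show ?thesis
      using v_pos[of "b - a"] False by (simp add: mult.commute)
  qed (use assms in simp)
  with \<open>d > 0\<close> show thesis
    by (rule that)
qed

lemma df_bounded_on_nat: obtains B where "B > 0" "\<And>y. v (df (of_nat y)) \<le> B"
proof -
  obtain d where "d > 0" and d: "\<And>a b. a \<in> Zp v \<Longrightarrow> b \<in> Zp v \<Longrightarrow> v (b - a) < d \<Longrightarrow> v (df b - df a) \<le> 1"
    using df_uniformly_continuous[of 1] by auto
  obtain M where M: "(1 / real p) ^ M < d"
    using p_power_eventually_less[OF \<open>d > 0\<close>] by blast
  define B where "B = 1 + (\<Sum>s<p ^ M. v (df (of_nat s)))"
  have "v (df (of_nat y)) \<le> B" for y
  proof -
    define s where "s = y mod p ^ M"
    have "s < p ^ M"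
      using p_ge_2 by (simp add: s_def)
    have "v (of_nat y - of_nat s) \<le> (1 / real p) ^ M"
      by (simp add: s_def v_of_nat_diff_le_iff_mod_eq)
    then have "v (df (of_nat y) - df (of_nat s)) \<le> 1"
      using M d of_nat_in_Zp by (meson le_less_trans)
    moreover have "v (df (of_nat s)) \<le> (\<Sum>s<p ^ M. v (df (of_nat s)))"
      using \<open>s < p ^ M\<close> by (intro member_le_sum) auto
    ultimately show ?thesis
      using v_triangle[of "df (of_nat y) - df (of_nat s)" "df (of_nat s)"] unfolding B_def by simp
  qed
  moreover have "B > 0"
    unfolding B_def by (simp add: add_pos_nonneg sum_nonneg)
  ultimately show thesis
    using that by blast
qed

lemma f_increment_approx_nat:
  assumes "e > 0"
  obtains N0 where "\<And>N y j. N \<ge> N0 \<Longrightarrow>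
    v (f (of_nat (y + p ^ N * j)) - f (of_nat y) - of_nat (p ^ N * j) * df (of_nat y)) \<le> e * (1 / real p) ^ N"
proof -
  obtain d where "d > 0" and d: "\<And>a x. a \<in> Zp v \<Longrightarrow> x \<in> Zp v \<Longrightarrow> v (x - a) < d \<Longrightarrow>
      v (f x - f a - (x - a) * df a) \<le> e * v (x - a)"
    using f_increment_approx[OF assms] by blast
  obtain N0 where N0: "\<And>N. N \<ge> N0 \<Longrightarrow> (1 / real p) ^ N < d"
    using p_power_eventually_less[OF \<open>d > 0\<close>] by blast
  have "v (f (of_nat (y + p ^ N * j)) - f (of_nat y) - of_nat (p ^ N * j) * df (of_nat y))
          \<le> e * (1 / real p) ^ N" if "N \<ge> N0" for N y j
  proof -
    define x :: 'a where "x = of_nat (y + p ^ N * j)"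
    have x: "x - of_nat y = of_nat (p ^ N * j)"
      by (simp add: x_def)
    then have small: "v (x - of_nat y) \<le> (1 / real p) ^ N"
      using v_of_nat_p_power_mult_le[of N j] by simp
    have "x \<in> Zp v"
      unfolding x_def by (rule of_nat_in_Zp)
    moreover have "v (x - of_nat y) < d"
      using small N0[OF that] by linarith
    ultimately have "v (f x - f (of_nat y) - (x - of_nat y) * df (of_nat y)) \<le> e * v (x - of_nat y)"
      by (rule d[OF of_nat_in_Zp])
    then have "v (f (of_nat (y + p ^ N * j)) - f (of_nat y) - of_nat (p ^ N * j) * df (of_nat y))
          \<le> e * v (x - of_nat y)"
      by (simp only: x_def[symmetric] x)
    also have "\<dots> \<le> e * (1 / real p) ^ N"
      using small assms by (simp add: mult_left_mono)
    finally show ?thesis .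
  qed
  then show thesis
    using that by blast
qed

lemma f_vconv_if_residues_vconv:
  assumes "a \<in> Zp v" and r: "\<And>m. v (a - of_nat (r m)) \<le> (1 / real p) ^ m"
  shows "vconv v (\<lambda>m. f (of_nat (r m))) (f a)"
proof -
  obtain d where "d > 0" and d: "\<And>b x. b \<in> Zp v \<Longrightarrow> x \<in> Zp v \<Longrightarrow> v (x - b) < d \<Longrightarrow>
      v (f x - f b - (x - b) * df b) \<le> 1 * v (x - b)"
    using f_increment_approx[of 1] by auto
  obtain M where M: "\<And>m. m \<ge> M \<Longrightarrow> (1 / real p) ^ m < d"
    using p_power_eventually_less[OF \<open>d > 0\<close>] by blast
  have "v (f (of_nat (r m)) - f a) \<le> (1 + v (df a)) * (1 / real p) ^ m" if "m \<ge> M" for m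
  proof -
    have close: "v (of_nat (r m) - a) \<le> (1 / real p) ^ m"
      using r[of m] by (simp add: v_minus_commute)
    have "f (of_nat (r m)) - f a = (f (of_nat (r m)) - f a - (of_nat (r m) - a) * df a) + (of_nat (r m) - a) * df a"
      by simp
    then have "v (f (of_nat (r m)) - f a)
        \<le> v (f (of_nat (r m)) - f a - (of_nat (r m) - a) * df a) + v (of_nat (r m) - a) * v (df a)"
      using v_triangle by (metis v_mult)
    also have "\<dots> \<le> v (of_nat (r m) - a) + v (of_nat (r m) - a) * v (df a)"
      using d[OF assms(1) of_nat_in_Zp le_less_trans[OF close M[OF that]]] by simp
    also have "\<dots> \<le> (1 + v (df a)) * (1 / real p) ^ m"
      using close mult_left_mono[OF close, of "v (df a)"] by (simp add: algebra_simps)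
    finally show ?thesis .
  qed
  then show ?thesis
    by (intro vconv_dominated[OF _ tendsto_mult_right_zero[OF p_power_tendsto_0]])
      (auto simp: eventually_sequentially)
qed

section \<open>Riemann sums of the \<open>q\<close>-integral over balls\<close>

text \<open>\<open>riemann_sum m r N\<close> is the Riemann sum of the \<open>q\<close>-integral of \<open>f\<close> over the ball
  \<open>r + p^m \<int>\<^sub>p\<close> that uses the points \<open>y < p^N\<close> of the ball.\<close>

definition partial_sum :: "nat \<Rightarrow> nat \<Rightarrow> nat \<Rightarrow> 'a" where
  "partial_sum m r N =
     (\<Sum>y<p ^ N. if y mod p ^ m = r then f (of_nat y) * qpow v q (of_nat y) else 0)"

definition riemann_sum :: "nat \<Rightarrow> nat \<Rightarrow> nat \<Rightarrow> 'a" where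
  "riemann_sum m r N = partial_sum m r N / qnum v q (of_nat (p ^ N))"

definition deriv_partial_sum :: "nat \<Rightarrow> nat \<Rightarrow> nat \<Rightarrow> 'a" where
  "deriv_partial_sum m r N =
     (\<Sum>y<p ^ N. if y mod p ^ m = r then qpow v q (of_nat y) * df (of_nat y) else 0)"

text \<open>Passing from \<open>p^N\<close> to \<open>p^(N+1)\<close> points replaces each point \<open>y\<close> by the \<open>p\<close> points
  \<open>y + p^N j\<close>, and \<open>[p^(N+1)] = [p^N] \<Sum>\<^sub>j q^(p^N j)\<close>.\<close>

lemma riemann_sum_Suc_diff:
  assumes "m \<le> N"
  shows "riemann_sum m r (Suc N) - riemann_sum m r N =
    (\<Sum>y<p ^ N. if y mod p ^ m = r then qpow v q (of_nat y) *
        (\<Sum>j<p. (f (of_nat (y + p ^ N * j)) - f (of_nat y)) * qpow v q (of_nat (p ^ N * j))) else 0)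
    / qnum v q (of_nat (p ^ Suc N))"
proof -
  define P where "P = p ^ N"
  define G where "G = (\<Sum>j<p. qpow v q (of_nat (P * j)))"
  have Q: "qnum v q (of_nat (p ^ Suc N)) = qnum v q (of_nat P) * G"
    unfolding P_def G_def power_Suc2 by (rule qnum_of_nat_mult)
  have "qnum v q (of_nat P) \<noteq> 0" "G \<noteq> 0"
    using Q qnum_p_power_nonzero[of "Suc N"] by (auto simp: P_def)
  have shift: "(y + P * j) mod p ^ m = y mod p ^ m" for y j
    using assms by (simp add: P_def mod_add_power_mult)
  have "partial_sum m r (Suc N) = (\<Sum>j<p. \<Sum>y<P. if (y + P * j) mod p ^ m = r
          then f (of_nat (y + P * j)) * qpow v q (of_nat (y + P * j)) else 0)"
    unfolding partial_sum_def P_def power_Suc2 by (rule sum_lessThan_mult_split)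
  also have "\<dots> = (\<Sum>y<P. \<Sum>j<p. if y mod p ^ m = r
          then f (of_nat (y + P * j)) * qpow v q (of_nat y) * qpow v q (of_nat (P * j)) else 0)"
    by (subst sum.swap) (simp only: shift qpow_of_nat_add mult.assoc)
  finally have "partial_sum m r (Suc N) - partial_sum m r N * G = (\<Sum>y<P. \<Sum>j<p.
      (if y mod p ^ m = r then f (of_nat (y + P * j)) * qpow v q (of_nat y) * qpow v q (of_nat (P * j)) else 0)
      - (if y mod p ^ m = r then f (of_nat y) * qpow v q (of_nat y) else 0) * qpow v q (of_nat (P * j)))"
    by (simp add: partial_sum_def G_def P_def sum_product sum_subtractf)
  also have "\<dots> = (\<Sum>y<P. if y mod p ^ m = r then qpow v q (of_nat y) *
        (\<Sum>j<p. (f (of_nat (y + P * j)) - f (of_nat y)) * qpow v q (of_nat (P * j))) else 0)"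
    by (intro sum.cong refl) (simp add: sum_distrib_left algebra_simps)
  finally have numerator: "partial_sum m r (Suc N) - partial_sum m r N * G = \<dots>" .
  have "riemann_sum m r (Suc N) - riemann_sum m r N
          = (partial_sum m r (Suc N) - partial_sum m r N * G) / qnum v q (of_nat (p ^ Suc N))"
    using \<open>qnum v q (of_nat P) \<noteq> 0\<close> \<open>G \<noteq> 0\<close>
    unfolding riemann_sum_def Q P_def[symmetric] by (simp add: field_simps)
  then show ?thesis
    unfolding numerator P_def .
qed

lemma v_increment_sum_minus_linear_le:
  assumes approx: "\<And>j. v (f (of_nat (y + p ^ N * j)) - f (of_nat y) - of_nat (p ^ N * j) * df (of_nat y))
                      \<le> e * (1 / real p) ^ N"
    and "v (df (of_nat y)) \<le> B" "0 \<le> B" "0 \<le> e"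
  shows "v ((\<Sum>j<p. (f (of_nat (y + p ^ N * j)) - f (of_nat y)) * qpow v q (of_nat (p ^ N * j)))
            - of_nat (p ^ N) * (\<Sum>j<p. of_nat j) * df (of_nat y))
         \<le> (1 / real p) ^ N * max e (B * (1 / real p) ^ N)"
proof -
  define t where "t j = (of_nat (p ^ N * j) :: 'a)" for j
  have "(\<Sum>j<p. (f (of_nat (y + p ^ N * j)) - f (of_nat y)) * qpow v q (t j))
            - of_nat (p ^ N) * (\<Sum>j<p. of_nat j) * df (of_nat y)
        = (\<Sum>j<p. (f (of_nat (y + p ^ N * j)) - f (of_nat y) - t j * df (of_nat y)) * qpow v q (t j)
                 + t j * df (of_nat y) * (qpow v q (t j) - 1))"
    by (simp add: t_def sum_distrib_left sum_distrib_right sum_subtractf[symmetric] algebra_simps)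
  also have "v \<dots> \<le> (1 / real p) ^ N * max e (B * (1 / real p) ^ N)"
  proof (intro v_sum_le v_add_le)
    have le_e: "e * (1 / real p) ^ N \<le> (1 / real p) ^ N * max e (B * (1 / real p) ^ N)"
      by (subst mult.commute) (rule mult_left_mono, simp_all)
    have le_B: "(1 / real p) ^ N * B * (1 / real p) ^ N \<le> (1 / real p) ^ N * max e (B * (1 / real p) ^ N)"
      unfolding mult.assoc by (rule mult_left_mono) simp_all
    fix j
    have "v ((f (of_nat (y + p ^ N * j)) - f (of_nat y) - t j * df (of_nat y)) * qpow v q (t j))
          \<le> e * (1 / real p) ^ N"
      using approx[of j] unfolding v_mult t_def v_qpow_of_nat by simp
    then show "v ((f (of_nat (y + p ^ N * j)) - f (of_nat y) - t j * df (of_nat y)) * qpow v q (t j))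
          \<le> (1 / real p) ^ N * max e (B * (1 / real p) ^ N)"
      using le_e by (rule order_trans)
    have "v (t j * df (of_nat y) * (qpow v q (t j) - 1)) \<le> (1 / real p) ^ N * B * (1 / real p) ^ N"
      unfolding v_mult t_def
      using v_of_nat_p_power_mult_le[of N j] v_qpow_p_power_mult_minus_1_le[of N j] assms(2,3)
      by (intro mult_mono) auto
    then show "v (t j * df (of_nat y) * (qpow v q (t j) - 1))
          \<le> (1 / real p) ^ N * max e (B * (1 / real p) ^ N)"
      using le_B by (rule order_trans)
  qed (use assms(4) in simp)
  finally show ?thesis
    by (simp add: t_def)
qed

text \<open>To first order in \<open>p^N j\<close> the numerator above is \<open>p^N (\<Sum>\<^sub>j j)\<close> times
  \<open>deriv_partial_sum\<close>, with an error of size \<open>p^-N\<close>; dividing by \<open>[p^(N+1)]\<close> costs a factor \<open>p\<close>.\<close>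

lemma v_riemann_sum_Suc_diff_le:
  assumes "m \<le> N" "0 \<le> e" "\<And>y. v (df (of_nat y)) \<le> B" "0 \<le> B"
    and approx: "\<And>y j. v (f (of_nat (y + p ^ N * j)) - f (of_nat y) - of_nat (p ^ N * j) * df (of_nat y))
                      \<le> e * (1 / real p) ^ N"
  shows "v (riemann_sum m r (Suc N) - riemann_sum m r N)
           \<le> real p * max (v (deriv_partial_sum m r N)) (max e (B * (1 / real p) ^ N))"
proof -
  define c :: 'a where "c = of_nat (p ^ N) * (\<Sum>j<p. of_nat j)"
  define X where "X y = (\<Sum>j<p. (f (of_nat (y + p ^ N * j)) - f (of_nat y)) * qpow v q (of_nat (p ^ N * j)))" for y
  define M where "M = max (v (deriv_partial_sum m r N)) (max e (B * (1 / real p) ^ N))"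
  have M: "0 \<le> M" "v (deriv_partial_sum m r N) \<le> M" "max e (B * (1 / real p) ^ N) \<le> M"
    using assms(2) by (auto simp: M_def)
  have "(\<Sum>y<p ^ N. if y mod p ^ m = r then qpow v q (of_nat y) * X y else 0)
      = c * deriv_partial_sum m r N
        + (\<Sum>y<p ^ N. if y mod p ^ m = r then qpow v q (of_nat y) * (X y - c * df (of_nat y)) else 0)"
    unfolding deriv_partial_sum_def sum_distrib_left sum.distrib[symmetric]
    by (intro sum.cong refl) (simp add: algebra_simps)
  also have "v \<dots> \<le> (1 / real p) ^ N * M"
  proof (intro v_add_le v_sum_le)
    have "v c \<le> (1 / real p) ^ N"
      unfolding c_def v_mult v_of_nat_p_power
      using v_sum_le[of "{..<p}" "\<lambda>j. of_nat j" 1] v_of_nat_le_1 by (simp add: mult_left_le)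
    then show "v (c * deriv_partial_sum m r N) \<le> (1 / real p) ^ N * M"
      unfolding v_mult using M by (intro mult_mono) auto
    fix y
    have "v (X y - c * df (of_nat y)) \<le> (1 / real p) ^ N * M"
      using v_increment_sum_minus_linear_le[OF approx assms(3,4,2), of y] M(3)
      unfolding X_def c_def by (meson mult_left_mono order_trans zero_le_power zero_le_divide_1_iff of_nat_0_le_iff)
    then show "v (if y mod p ^ m = r then qpow v q (of_nat y) * (X y - c * df (of_nat y)) else 0)
                 \<le> (1 / real p) ^ N * M"
      using M by (simp add: v_mult)
  qed (use M in simp)
  finally have "v (riemann_sum m r (Suc N) - riemann_sum m r N) \<le> (1 / real p) ^ N * M / (1 / real p) ^ Suc N"
    unfolding riemann_sum_Suc_diff[OF assms(1)] v_divide v_qnum_p_power X_def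
    using p_ge_2 by (intro divide_right_mono) simp_all
  also have "\<dots> = real p * M"
    using p_ge_2 by simp
  finally show ?thesis
    unfolding M_def .
qed

lemma v_deriv_partial_sum_le:
  "(\<And>y. v (df (of_nat y)) \<le> B) \<Longrightarrow> 0 \<le> B \<Longrightarrow> v (deriv_partial_sum m r N) \<le> B"
  unfolding deriv_partial_sum_def by (intro v_sum_le) (auto simp: v_mult)

lemma v_sum_qpow_df_over_ball_le:
  assumes "M \<le> N" "0 \<le> e" "v (df (of_nat s)) \<le> B" "B * (1 / real p) ^ (N - M) \<le> e"
    and osc: "\<And>k. v (df (of_nat (s + p ^ M * k)) - df (of_nat s)) \<le> e"
  shows "v (\<Sum>k<p ^ (N - M). qpow v q (of_nat (s + p ^ M * k)) * df (of_nat (s + p ^ M * k))) \<le> e"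
proof -
  have "(\<Sum>k<p ^ (N - M). qpow v q (of_nat (s + p ^ M * k)) * df (of_nat (s + p ^ M * k)))
      = qpow v q (of_nat s) * (df (of_nat s) * (\<Sum>k<p ^ (N - M). qpow v q (of_nat (p ^ M * k)))
          + (\<Sum>k<p ^ (N - M). qpow v q (of_nat (p ^ M * k)) * (df (of_nat (s + p ^ M * k)) - df (of_nat s))))"
    unfolding qpow_of_nat_add by (simp add: sum_distrib_left sum.distrib[symmetric] algebra_simps)
  also have "v \<dots> \<le> e"
    unfolding v_mult v_qpow_of_nat mult_1_left
  proof (rule v_add_le)
    show "v (df (of_nat s) * (\<Sum>k<p ^ (N - M). qpow v q (of_nat (p ^ M * k)))) \<le> e"
      unfolding v_mult v_sum_qpow_p_power_multiples[OF assms(1)]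
      using assms(3,4) by (meson mult_right_mono order_trans zero_le_power zero_le_divide_1_iff of_nat_0_le_iff)
    show "v (\<Sum>k<p ^ (N - M). qpow v q (of_nat (p ^ M * k)) * (df (of_nat (s + p ^ M * k)) - df (of_nat s))) \<le> e"
      using assms(2) by (intro v_sum_le) (simp_all only: v_mult v_qpow_of_nat mult_1_left osc)
  qed
  finally show ?thesis .
qed

lemma deriv_partial_sum_split:
  assumes "m \<le> M" "M \<le> N"
  shows "deriv_partial_sum m r N = (\<Sum>s<p ^ M. if s mod p ^ m = r then
           \<Sum>k<p ^ (N - M). qpow v q (of_nat (s + p ^ M * k)) * df (of_nat (s + p ^ M * k)) else 0)"
proof -
  define g where "g y = (if y mod p ^ m = r then qpow v q (of_nat y) * df (of_nat y) else 0)" for y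
  have "p ^ N = p ^ M * p ^ (N - M)"
    using assms(2) by (simp flip: power_add)
  then have "deriv_partial_sum m r N = (\<Sum>s<p ^ M. \<Sum>k<p ^ (N - M). g (s + p ^ M * k))"
    unfolding deriv_partial_sum_def g_def[symmetric]
    by (simp add: sum_lessThan_mult_split sum.swap[of _ "{..<p ^ M}"])
  also have "\<dots> = (\<Sum>s<p ^ M. if s mod p ^ m = r then
      \<Sum>k<p ^ (N - M). qpow v q (of_nat (s + p ^ M * k)) * df (of_nat (s + p ^ M * k)) else 0)"
    using assms(1) by (intro sum.cong refl) (simp add: g_def mod_add_power_mult)
  finally show ?thesis .
qed

text \<open>On each ball \<open>s + p^M \<int>\<^sub>p\<close> the derivative is almost constant, while
  \<open>\<Sum>\<^sub>k q^(p^M k) = [p^N] / [p^M]\<close> has absolute value \<open>p^(M-N)\<close>.\<close>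

lemma deriv_partial_sum_eventually_small:
  assumes "e > 0"
  shows "\<exists>N0. \<forall>N\<ge>N0. v (deriv_partial_sum m r N) \<le> e"
proof -
  obtain B where B: "B > 0" "\<And>y. v (df (of_nat y)) \<le> B"
    using df_bounded_on_nat by blast
  obtain d where "d > 0" and d: "\<And>a b. a \<in> Zp v \<Longrightarrow> b \<in> Zp v \<Longrightarrow> v (b - a) < d \<Longrightarrow> v (df b - df a) \<le> e"
    using df_uniformly_continuous[OF assms] by blast
  obtain M0 where M0: "\<forall>n\<ge>M0. (1 / real p) ^ n < d"
    using p_power_eventually_less[OF \<open>d > 0\<close>] by blast
  obtain K where K: "\<forall>n\<ge>K. (1 / real p) ^ n < e / B"
    using p_power_eventually_less[of "e / B"] assms B(1) by auto
  define M where "M = max m M0"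
  have osc: "v (df (of_nat (s + p ^ M * k)) - df (of_nat s)) \<le> e" for s k
  proof (rule d[OF of_nat_in_Zp of_nat_in_Zp])
    have "v (of_nat (s + p ^ M * k) - of_nat s) \<le> (1 / real p) ^ M"
      using v_of_nat_p_power_mult_le[of M k] by simp
    also have "\<dots> < d"
      using M0 by (simp add: M_def)
    finally show "v (of_nat (s + p ^ M * k) - of_nat s) < d" .
  qed
  have "v (deriv_partial_sum m r N) \<le> e" if N: "N \<ge> M + K" for N
  proof -
    have "m \<le> M" "M \<le> N"
      using N by (auto simp: M_def)
    have "B * (1 / real p) ^ (N - M) \<le> e"
      using K N B(1) by (simp add: pos_less_divide_eq mult.commute less_imp_le)
    then have "v (\<Sum>k<p ^ (N - M). qpow v q (of_nat (s + p ^ M * k)) * df (of_nat (s + p ^ M * k))) \<le> e" for s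
      using assms by (intro v_sum_qpow_df_over_ball_le[OF \<open>M \<le> N\<close> _ B(2) _ osc]) simp_all
    then show ?thesis
      unfolding deriv_partial_sum_split[OF \<open>m \<le> M\<close> \<open>M \<le> N\<close>]
      using assms by (intro v_sum_le) simp_all
  qed
  then show ?thesis
    by blast
qed

lemma riemann_sum_steps_small:
  assumes "e > 0"
  shows "\<exists>N0. \<forall>N\<ge>N0. v (riemann_sum m r (Suc N) - riemann_sum m r N) \<le> e"
proof -
  define e' where "e' = e / real p"
  have "e' > 0"
    using assms p_ge_2 by (simp add: e'_def)
  obtain B where B: "B > 0" "\<And>y. v (df (of_nat y)) \<le> B"
    using df_bounded_on_nat by blast
  obtain N1 where N1: "\<And>N y j. N \<ge> N1 \<Longrightarrow>
      v (f (of_nat (y + p ^ N * j)) - f (of_nat y) - of_nat (p ^ N * j) * df (of_nat y)) \<le> e' * (1 / real p) ^ N"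
    using f_increment_approx_nat[OF \<open>e' > 0\<close>] by blast
  obtain N2 where N2: "\<forall>N\<ge>N2. v (deriv_partial_sum m r N) \<le> e'"
    using deriv_partial_sum_eventually_small[OF \<open>e' > 0\<close>] by blast
  obtain N3 where N3: "\<forall>N\<ge>N3. (1 / real p) ^ N < e' / B"
    using p_power_eventually_less[of "e' / B"] \<open>e' > 0\<close> B(1) by auto
  have "v (riemann_sum m r (Suc N) - riemann_sum m r N) \<le> e" if "N \<ge> max m (max N1 (max N2 N3))" for N
  proof -
    have "B * (1 / real p) ^ N \<le> e'"
      using N3 that B(1) by (simp add: pos_less_divide_eq mult.commute less_imp_le)
    then have "max (v (deriv_partial_sum m r N)) (max e' (B * (1 / real p) ^ N)) \<le> e'"
      using N2 that by simp
    then have "real p * max (v (deriv_partial_sum m r N)) (max e' (B * (1 / real p) ^ N)) \<le> real p * e'"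
      by (rule mult_left_mono) simp
    moreover have "v (riemann_sum m r (Suc N) - riemann_sum m r N)
        \<le> real p * max (v (deriv_partial_sum m r N)) (max e' (B * (1 / real p) ^ N))"
      using that N1 B \<open>e' > 0\<close> by (intro v_riemann_sum_Suc_diff_le) auto
    ultimately show ?thesis
      using p_ge_2 by (simp add: e'_def)
  qed
  then show ?thesis
    by blast
qed

lemma riemann_sum_steps_bounded:
  obtains K N1 where "0 \<le> K"
    "\<And>m r N. N1 \<le> m \<Longrightarrow> m \<le> N \<Longrightarrow> v (riemann_sum m r (Suc N) - riemann_sum m r N) \<le> K"
proof -
  obtain B where B: "B > 0" "\<And>y. v (df (of_nat y)) \<le> B"
    using df_bounded_on_nat by blast
  obtain N1 where N1: "\<And>N y j. N \<ge> N1 \<Longrightarrow>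
      v (f (of_nat (y + p ^ N * j)) - f (of_nat y) - of_nat (p ^ N * j) * df (of_nat y)) \<le> 1 * (1 / real p) ^ N"
    using f_increment_approx_nat[of 1] by auto
  have "v (riemann_sum m r (Suc N) - riemann_sum m r N) \<le> real p * max B 1"
    if "N1 \<le> m" "m \<le> N" for m r N
  proof -
    have "(1 / real p) ^ N \<le> 1"
      using p_ge_2 by (simp add: power_le_one)
    then have "B * (1 / real p) ^ N \<le> B"
      using B(1) by (simp add: mult_left_le)
    moreover have "v (deriv_partial_sum m r N) \<le> B"
      using B by (intro v_deriv_partial_sum_le) auto
    ultimately have "max (v (deriv_partial_sum m r N)) (max 1 (B * (1 / real p) ^ N)) \<le> max B 1"
      by (auto simp: max_def)
    then have "real p * max (v (deriv_partial_sum m r N)) (max 1 (B * (1 / real p) ^ N)) \<le> real p * max B 1"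
      by (rule mult_left_mono) simp
    moreover have "v (riemann_sum m r (Suc N) - riemann_sum m r N)
        \<le> real p * max (v (deriv_partial_sum m r N)) (max 1 (B * (1 / real p) ^ N))"
      using that N1 B by (intro v_riemann_sum_Suc_diff_le) auto
    ultimately show ?thesis
      by linarith
  qed
  then show thesis
    using that[of "real p * max B 1" N1] by simp
qed

definition ball_integral :: "nat \<Rightarrow> nat \<Rightarrow> 'a" where
  "ball_integral m r = vlim v (riemann_sum m r)"

lemma riemann_sum_vconv: "vconv v (riemann_sum m r) (ball_integral m r)"
proof -
  obtain L where "vconv v (riemann_sum m r) L"
    using vconv_if_steps_small[OF riemann_sum_steps_small] by blast
  then show ?thesis
    unfolding ball_integral_def using vlim_eq by simp
qed

lemma riemann_sum_initial:
  assumes "r < p ^ m"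
  shows "riemann_sum m r m = f (of_nat r) * qpow v q (of_nat r) / qnum v q (of_nat (p ^ m))"
proof -
  have "partial_sum m r m = (\<Sum>y<p ^ m. if y = r then f (of_nat y) * qpow v q (of_nat y) else 0)"
    unfolding partial_sum_def by (intro sum.cong) auto
  then show ?thesis
    using assms by (simp add: riemann_sum_def)
qed

lemma ball_integral_near_initial_riemann_sum:
  obtains K N1 where "\<And>m r. N1 \<le> m \<Longrightarrow> v (ball_integral m r - riemann_sum m r m) \<le> K"
proof -
  obtain K N1 where "0 \<le> K"
    "\<And>m r N. N1 \<le> m \<Longrightarrow> m \<le> N \<Longrightarrow> v (riemann_sum m r (Suc N) - riemann_sum m r N) \<le> K"
    using riemann_sum_steps_bounded by blast
  then show thesis
    using that v_limit_diff_le_if_steps_le[OF riemann_sum_vconv] by blast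
qed

section \<open>Fourier inversion\<close>

lemma qfourier_root_eq:
  assumes w: "w \<in> roots_C p m"
  shows "qfourier p v q f w = (\<Sum>s<p ^ m. w ^ s * ball_integral m s)"
proof -
  have w1: "w ^ (p ^ m) = 1"
    using w by (simp add: roots_C_def)
  have "upow v w (of_nat y) * f (of_nat y) * qpow v q (of_nat y)
          = (\<Sum>s<p ^ m. w ^ s * (if y mod p ^ m = s then f (of_nat y) * qpow v q (of_nat y) else 0))" for y
  proof -
    have "(\<Sum>s<p ^ m. w ^ s * (if y mod p ^ m = s then f (of_nat y) * qpow v q (of_nat y) else 0))
            = (\<Sum>s<p ^ m. if y mod p ^ m = s then w ^ s * (f (of_nat y) * qpow v q (of_nat y)) else 0)"
      by (intro sum.cong) auto
    also have "\<dots> = w ^ (y mod p ^ m) * (f (of_nat y) * qpow v q (of_nat y))"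
      using p_ge_2 by simp
    finally show ?thesis
      using upow_of_nat[OF w1, of y] power_eq_power_mod[OF w1, of y, symmetric] by (simp add: mult.assoc)
  qed
  then have "(\<Sum>y<p ^ N. upow v w (of_nat y) * f (of_nat y) * qpow v q (of_nat y)) / qnum v q (of_nat (p ^ N))
           = (\<Sum>s<p ^ m. w ^ s * riemann_sum m s N)" for N
    unfolding riemann_sum_def partial_sum_def
    by (simp add: sum.swap[of _ "{..<p ^ N}"] sum_distrib_left sum_divide_distrib)
  moreover have "vconv v (\<lambda>N. \<Sum>s<p ^ m. w ^ s * riemann_sum m s N) (\<Sum>s<p ^ m. w ^ s * ball_integral m s)"
    by (intro vconv_sum vconv_cmult riemann_sum_vconv) simp
  ultimately show ?thesis
    unfolding qfourier_def Iq_def by (simp add: mult.assoc vlim_eq)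
qed

lemma sum_roots_C_qfourier:
  assumes x: "x \<in> Zp v" and r: "r < p ^ m" "v (x - of_nat r) \<le> (1 / real p) ^ m"
  shows "(\<Sum>w\<in>roots_C p m. upow v (inverse w) x * qfourier p v q f w) = of_nat (p ^ m) * ball_integral m r"
proof -
  have "(\<Sum>w\<in>roots_C p m. upow v (inverse w) x * qfourier p v q f w)
      = (\<Sum>w\<in>roots_C p m. inverse w ^ r * (\<Sum>s<p ^ m. w ^ s * ball_integral m s))"
    using upow_eq_power[OF _ x r(2)]
    by (intro sum.cong refl) (simp add: qfourier_root_eq roots_C_def power_inverse)
  also have "\<dots> = (\<Sum>s<p ^ m. ball_integral m s * (\<Sum>w\<in>roots_C p m. inverse w ^ r * w ^ s))"
    unfolding sum_distrib_left by (subst sum.swap) (simp add: mult_ac)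
  also have "\<dots> = (\<Sum>s<p ^ m. if s = r then ball_integral m r * of_nat (p ^ m) else 0)"
    using r(1) by (intro sum.cong refl) (auto simp: sum_roots_C_orthogonality)
  also have "\<dots> = of_nat (p ^ m) * ball_integral m r"
    using r(1) by (simp add: mult.commute)
  finally show ?thesis .
qed

lemma p_power_mult_integral_error_vconv_0:
  "vconv v (\<lambda>n. of_nat (p ^ n) * (ball_integral n (r n) - riemann_sum n (r n) n)) 0"
proof -
  obtain K N1 where K: "\<And>m r. N1 \<le> m \<Longrightarrow> v (ball_integral m r - riemann_sum m r m) \<le> K"
    using ball_integral_near_initial_riemann_sum by metis
  show ?thesis
  proof (rule vconv_dominated[OF _ tendsto_mult_right_zero[OF p_power_tendsto_0]])
    show "\<forall>\<^sub>F n in sequentially. v (of_nat (p ^ n) * (ball_integral n (r n) - riemann_sum n (r n) n) - 0)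
            \<le> K * (1 / real p) ^ n"
      using eventually_ge_at_top[of N1]
    proof eventually_elim
      case (elim n)
      have "v (of_nat (p ^ n) * (ball_integral n (r n) - riemann_sum n (r n) n))
              = (1 / real p) ^ n * v (ball_integral n (r n) - riemann_sum n (r n) n)"
        by (simp only: v_mult v_of_nat_p_power)
      also have "\<dots> \<le> (1 / real p) ^ n * K"
        using K[OF elim] by (rule mult_left_mono) simp
      finally show ?case
        by (simp add: mult.commute)
    qed
  qed
qed

lemma p_power_mult_riemann_sum_initial:
  assumes "r < p ^ n"
  shows "of_nat (p ^ n) * riemann_sum n r n
           = f (of_nat r) * qpow v q (of_nat r) * ((q - 1) * (of_nat (p ^ n) / (qpow v q (of_nat (p ^ n)) - 1)))"
proof -
  have "P * (F / ((1 - Q) / (1 - q))) = F * ((q - 1) * (P / (Q - 1)))" if "Q \<noteq> 1" for P F Q :: 'a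
    using that q_ne_1 by (simp add: field_simps)
  moreover have "qpow v q (of_nat (p ^ n)) \<noteq> 1"
    using qnum_p_power_nonzero[of n] by (auto simp: qnum_def)
  ultimately show ?thesis
    unfolding riemann_sum_initial[OF assms] qnum_def by blast
qed

lemma p_power_mult_riemann_sum_initial_vconv:
  assumes x: "x \<in> Zp v" and r: "\<And>m. r m < p ^ m" "\<And>m. v (x - of_nat (r m)) \<le> (1 / real p) ^ m"
  shows "vconv v (\<lambda>n. of_nat (p ^ n) * riemann_sum n (r n) n) (f x * qpow v q x * ((q - 1) * inverse (plog v q)))"
proof -
  have "v (qpow v q (of_nat (r n)) - qpow v q x) \<le> 1 * (1 / real p) ^ n" for n
    using order_trans[OF v_qpow_diff_le[OF v_of_nat_le_1 v_le_1_if_in_Zp[OF x]]] r(2)[of n]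
      v_minus_commute[of x "of_nat (r n)"] by simp
  then have "vconv v (\<lambda>n. qpow v q (of_nat (r n))) (qpow v q x)"
    by (rule vconv_dominated_p_power)
  then show ?thesis
    unfolding p_power_mult_riemann_sum_initial[OF r(1)]
    by (intro vconv_mult vconv_cmult f_vconv_if_residues_vconv[OF x r(2)] p_power_div_qpow_minus_1_vconv)
qed

lemma fourier_sum_vconv:
  assumes x: "x \<in> Zp v"
  shows "vconv v (\<lambda>n. \<Sum>w\<in>roots_C p n. upow v (inverse w) x * qfourier p v q f w)
           (f x * qpow v q x * (q - 1) / plog v q)"
proof -
  obtain r where r: "\<And>m. r m < p ^ m" "\<And>m. v (x - of_nat (r m)) \<le> (1 / real p) ^ m"
    using Zp_nat_sequence[OF x] by metis
  from vconv_add[OF p_power_mult_integral_error_vconv_0[of r] p_power_mult_riemann_sum_initial_vconv[OF x r]]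
  have "vconv v (\<lambda>n. of_nat (p ^ n) * ball_integral n (r n)) (f x * qpow v q x * ((q - 1) * inverse (plog v q)))"
    by (simp add: right_diff_distrib)
  then show ?thesis
    by (simp add: sum_roots_C_qfourier[OF x r] divide_inverse mult.assoc)
qed

end

theorem proposition1:
  fixes p :: nat and v :: "'a::field \<Rightarrow> real" and q :: 'a and f :: "'a \<Rightarrow> 'a"
  assumes "Cp_field p v"
    and "v (q - 1) < real p powr (- 1 / (real p - 1))"
    and "q \<noteq> 1"
    and "UD v f"
    and "x \<in> Zp v"
  shows "\<exists>L. vconv v (\<lambda>n. \<Sum>w\<in>roots_C p n. upow v (inverse w) x * qfourier p v q f w) L
             \<and> f x * qpow v q x = plog v q / (q - 1) * L"
proof -
  interpret Cp_valued p v
    using assms(1) by unfold_locales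
  interpret ud_function p v q f
    using assms(2-4) by unfold_locales (simp_all add: rho_def)
  have "f x * qpow v q x = plog v q / (q - 1) * (f x * qpow v q x * (q - 1) / plog v q)"
    using plog_q_nonzero q_ne_1 by simp
  with fourier_sum_vconv[OF assms(5)] show ?thesis
    by blast
qed

end
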